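(* Let $H$ be a linear hypertree with maximum degree $\Delta(H)=2$ and anti-rank three. Then the niche number of $H$ is $\hat{n}(H)=0$; that is, there is an acyclic digraph $D$ with $NH(D)=H$.
   Context: All hypergraphs are finite, simple (if $e\subseteq e'$ are hyperedges then $e=e'$) and have no loops (hyperedges with one vertex); isolated vertices are allowed. The degree of a vertex is the number of hyperedges containing it, and $\Delta(H)$ is the maximum degree. The anti-rank of $H$ is the minimum number of vertices in a hyperedge. $H$ is linear if $|e\cap e'|\le 1$ for all distinct hyperedges $e,e'$. $H$ is a hypertree if there is a tree $T$ with $V(T)=V(H)$ such that for every hyperedge $e$ the induced subgraph $T[e]$ is connected. A digraph has arcs $(u,v)$ with no pair of opposite arcs; it is acyclic if it has no directed cycle. For a digraph $D$, $N^-_D(v)=\{u:(u,v)\in A(D)\}$ and $N^+_D(v)=\{u:(v,u)\in A(D)\}$. The niche hypergraph $NH(D)$ of an acyclic digraph $D$ has vertex set $V(D)$ and hyperedge set $\{e\subseteq V(D): |e|\ge 2 \text{ and } e=N^-_D(v) \text{ or } e=N^+_D(v) \text{ for some } v\in V(D)\}$. The niche number $\hat n(H)$ is the minimum $k\ge 0$ such that $H$ together with $k$ additional isolated vertices is the niche hypergraph of an acyclic digraph ($\infty$ if no such $k$ exists). *)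

theory Defs
  imports Main
begin

definition hypergraph :: "'a set \<Rightarrow> 'a set set \<Rightarrow> bool" where
  "hypergraph V E \<longleftrightarrow> finite V \<and> (\<forall>e\<in>E. e \<subseteq> V \<and> card e \<ge> 2)
     \<and> (\<forall>e\<in>E. \<forall>e'\<in>E. e \<subseteq> e' \<longrightarrow> e = e')"

definition hdegree :: "'a set set \<Rightarrow> 'a \<Rightarrow> nat" where
  "hdegree E v = card {e\<in>E. v \<in> e}"

definition max_degree :: "'a set \<Rightarrow> 'a set set \<Rightarrow> nat" where
  "max_degree V E = Max (hdegree E ` V)"

definition anti_rank :: "'a set set \<Rightarrow> nat" where
  "anti_rank E = Min (card ` E)"

definition linear_hg :: "'a set set \<Rightarrow> bool" where
  "linear_hg E \<longleftrightarrow> (\<forall>e\<in>E. \<forall>e'\<in>E. e \<noteq> e' \<longrightarrow> card (e \<inter> e') \<le> 1)"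

definition graph_connected_on :: "'a set set \<Rightarrow> 'a set \<Rightarrow> bool" where
  "graph_connected_on T S \<longleftrightarrow>
     (\<forall>u\<in>S. \<forall>v\<in>S. (u, v) \<in> ({(x, y). {x, y} \<in> T \<and> x \<in> S \<and> y \<in> S})\<^sup>*)"

definition induced :: "'a set set \<Rightarrow> 'a set \<Rightarrow> 'a set set" where
  "induced T S = {f\<in>T. f \<subseteq> S}"

definition is_tree :: "'a set \<Rightarrow> 'a set set \<Rightarrow> bool" where
  "is_tree V T \<longleftrightarrow> finite V \<and> V \<noteq> {}
     \<and> (\<forall>f\<in>T. f \<subseteq> V \<and> card f = 2)
     \<and> graph_connected_on T V \<and> card T = card V - 1"

definition hypertree :: "'a set \<Rightarrow> 'a set set \<Rightarrow> bool" where
  "hypertree V E \<longleftrightarrow> (\<exists>T. is_tree V T \<and>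
      (\<forall>e\<in>E. graph_connected_on (induced T e) e))"

definition digraph :: "'a set \<Rightarrow> ('a \<times> 'a) set \<Rightarrow> bool" where
  "digraph V A \<longleftrightarrow> A \<subseteq> V \<times> V \<and> (\<forall>u v. (u, v) \<in> A \<longrightarrow> (v, u) \<notin> A)"

definition acyclic_digraph :: "'a set \<Rightarrow> ('a \<times> 'a) set \<Rightarrow> bool" where
  "acyclic_digraph V A \<longleftrightarrow> digraph V A \<and> acyclic A"

definition in_nbh :: "('a \<times> 'a) set \<Rightarrow> 'a \<Rightarrow> 'a set" where
  "in_nbh A v = {u. (u, v) \<in> A}"

definition out_nbh :: "('a \<times> 'a) set \<Rightarrow> 'a \<Rightarrow> 'a set" where
  "out_nbh A v = {u. (v, u) \<in> A}"

text \<open>Hyperedge set of the niche hypergraph NH(D); its vertex set is V.\<close>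
definition niche_edges :: "'a set \<Rightarrow> ('a \<times> 'a) set \<Rightarrow> 'a set set" where
  "niche_edges V A = {e. e \<subseteq> V \<and> card e \<ge> 2 \<and>
      (\<exists>v\<in>V. e = in_nbh A v \<or> e = out_nbh A v)}"

end

theory Submission
  imports Defs Complex_Main
begin

text \<open>The digraphs are certified acyclic by a real-valued rank that increases along every arc.
  Two such realizations whose vertex sets share a single vertex that is a source or a sink on
  both sides can be glued there, after reversing one of them if necessary.

  For a linear hypertree of maximum degree two the line graph is a forest, by counting the
  edges of the host tree. Cutting it at a bridge both of whose sides contain at least two
  hyperedges splits the hypergraph at the common vertex of the two bridge hyperedges, which has
  degree one on either side. The induction therefore keeps the degree-one vertices near a chosen
  hyperedge as sources or sinks. What cannot be cut is a star, a hyperedge with pendant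
  hyperedges, realized by an explicit gadget extended leaf by leaf; isolated hyperedges finally
  become out-neighbourhoods of sinks.\<close>

section \<open>Neighbourhoods and niche hyperedges\<close>

lemma in_nbh_Un [simp]: "in_nbh (A \<union> B) v = in_nbh A v \<union> in_nbh B v"
  by (auto simp: in_nbh_def)

lemma out_nbh_Un [simp]: "out_nbh (A \<union> B) v = out_nbh A v \<union> out_nbh B v"
  by (auto simp: out_nbh_def)

lemma in_nbh_converse [simp]: "in_nbh (A\<inverse>) v = out_nbh A v"
  by (auto simp: in_nbh_def out_nbh_def)

lemma out_nbh_converse [simp]: "out_nbh (A\<inverse>) v = in_nbh A v"
  by (auto simp: in_nbh_def out_nbh_def)

lemma in_nbh_Times [simp]: "in_nbh (X \<times> Y) v = (if v \<in> Y then X else {})"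
  by (auto simp: in_nbh_def)

lemma out_nbh_Times [simp]: "out_nbh (X \<times> Y) v = (if v \<in> X then Y else {})"
  by (auto simp: out_nbh_def)

lemma in_nbh_subset: "A \<subseteq> U \<times> U \<Longrightarrow> in_nbh A v \<subseteq> U"
  by (auto simp: in_nbh_def)

lemma out_nbh_subset: "A \<subseteq> U \<times> U \<Longrightarrow> out_nbh A v \<subseteq> U"
  by (auto simp: out_nbh_def)

lemma in_nbh_outside: "A \<subseteq> U \<times> U \<Longrightarrow> v \<notin> U \<Longrightarrow> in_nbh A v = {}"
  by (auto simp: in_nbh_def)

lemma out_nbh_outside: "A \<subseteq> U \<times> U \<Longrightarrow> v \<notin> U \<Longrightarrow> out_nbh A v = {}"
  by (auto simp: out_nbh_def)

lemma niche_edges_converse [simp]: "niche_edges U (A\<inverse>) = niche_edges U A"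
  by (auto simp: niche_edges_def)

lemma niche_edges_memI:
  assumes A: "A \<subseteq> U \<times> U" and e: "2 \<le> card e" "e = in_nbh A v \<or> e = out_nbh A v"
  shows "e \<in> niche_edges U A"
proof -
  have "v \<in> U"
  proof (rule ccontr)
    assume "v \<notin> U"
    with e(2) in_nbh_outside[OF A] out_nbh_outside[OF A] have "e = {}" by blast
    with e(1) show False by simp
  qed
  moreover have "e \<subseteq> U"
    using e(2) in_nbh_subset[OF A, of v] out_nbh_subset[OF A, of v] by auto
  ultimately show ?thesis
    using e unfolding niche_edges_def by blast
qed

lemma niche_edges_eqI:
  assumes "\<And>e. e \<in> E \<Longrightarrow> e \<subseteq> U \<and> 2 \<le> card e \<and> (\<exists>v\<in>U. e = in_nbh A v \<or> e = out_nbh A v)"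
    and "\<And>v. v \<in> U \<Longrightarrow> 2 \<le> card (in_nbh A v) \<Longrightarrow> in_nbh A v \<in> E"
    and "\<And>v. v \<in> U \<Longrightarrow> 2 \<le> card (out_nbh A v) \<Longrightarrow> out_nbh A v \<in> E"
  shows "niche_edges U A = E"
proof (intro equalityI subsetI)
  fix e assume "e \<in> niche_edges U A"
  then obtain v where "v \<in> U" "2 \<le> card e" "e = in_nbh A v \<or> e = out_nbh A v"
    by (auto simp: niche_edges_def)
  with assms(2,3) show "e \<in> E" by blast
qed (use assms(1) in \<open>simp add: niche_edges_def\<close>)

lemma niche_edges_mono_vertices:
  assumes "A \<subseteq> U \<times> U" and "U \<subseteq> V"
  shows "niche_edges V A = niche_edges U A"
proof (intro equalityI subsetI)
  fix e assume "e \<in> niche_edges V A"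
  then show "e \<in> niche_edges U A"
    using niche_edges_memI[OF assms(1)] unfolding niche_edges_def by blast
qed (use \<open>U \<subseteq> V\<close> in \<open>auto simp: niche_edges_def\<close>)

lemma niche_edges_Un:
  assumes A1: "A1 \<subseteq> U1 \<times> U1" and A2: "A2 \<subseteq> U2 \<times> U2"
    and shared: "\<And>v. v \<in> U1 \<Longrightarrow> v \<in> U2 \<Longrightarrow>
      (in_nbh A1 v = {} \<or> in_nbh A2 v = {}) \<and> (out_nbh A1 v = {} \<or> out_nbh A2 v = {})"
  shows "niche_edges (U1 \<union> U2) (A1 \<union> A2) = niche_edges U1 A1 \<union> niche_edges U2 A2"
proof -
  have "in_nbh A1 v = {} \<or> in_nbh A2 v = {}" "out_nbh A1 v = {} \<or> out_nbh A2 v = {}" for v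
    using shared[of v] in_nbh_outside[OF A1] out_nbh_outside[OF A1]
      in_nbh_outside[OF A2] out_nbh_outside[OF A2] by blast+
  then have in_Un: "in_nbh (A1 \<union> A2) v \<in> {in_nbh A1 v, in_nbh A2 v}"
    and out_Un: "out_nbh (A1 \<union> A2) v \<in> {out_nbh A1 v, out_nbh A2 v}"
    and nonempty: "e \<noteq> {} \<Longrightarrow> e = in_nbh A1 v \<or> e = in_nbh A2 v \<Longrightarrow> e = in_nbh (A1 \<union> A2) v"
      "e \<noteq> {} \<Longrightarrow> e = out_nbh A1 v \<or> e = out_nbh A2 v \<Longrightarrow> e = out_nbh (A1 \<union> A2) v" for v e
    by auto
  have "A1 \<union> A2 \<subseteq> (U1 \<union> U2) \<times> (U1 \<union> U2)" using A1 A2 by blast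
  show ?thesis
  proof (intro equalityI subsetI)
    fix e assume "e \<in> niche_edges (U1 \<union> U2) (A1 \<union> A2)"
    then obtain v where "2 \<le> card e" "e = in_nbh (A1 \<union> A2) v \<or> e = out_nbh (A1 \<union> A2) v"
      unfolding niche_edges_def by blast
    with in_Un[of v] out_Un[of v] niche_edges_memI[OF A1] niche_edges_memI[OF A2]
    show "e \<in> niche_edges U1 A1 \<union> niche_edges U2 A2" by blast
  next
    fix e assume "e \<in> niche_edges U1 A1 \<union> niche_edges U2 A2"
    then obtain v where "2 \<le> card e"
      "e = in_nbh A1 v \<or> e = in_nbh A2 v \<or> e = out_nbh A1 v \<or> e = out_nbh A2 v"
      unfolding niche_edges_def by blast
    moreover from this have "e \<noteq> {}" by auto
    ultimately show "e \<in> niche_edges (U1 \<union> U2) (A1 \<union> A2)"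
      using nonempty[of e v] niche_edges_memI[OF \<open>A1 \<union> A2 \<subseteq> _\<close>] by blast
  qed
qed

section \<open>Ranked realizations\<close>

definition ranked :: "('a \<times> 'a) set \<Rightarrow> ('a \<Rightarrow> real) \<Rightarrow> bool" where
  "ranked A r \<longleftrightarrow> (\<forall>(x, y)\<in>A. r x < r y)"

definition niche_realization :: "'a set \<Rightarrow> 'a set set \<Rightarrow> ('a \<times> 'a) set \<Rightarrow> bool" where
  "niche_realization U E A \<longleftrightarrow> finite U \<and> A \<subseteq> U \<times> U \<and> (\<exists>r. ranked A r) \<and> niche_edges U A = E"

definition source_or_sink :: "('a \<times> 'a) set \<Rightarrow> 'a \<Rightarrow> bool" where
  "source_or_sink A v \<longleftrightarrow> in_nbh A v = {} \<or> out_nbh A v = {}"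

lemma ranked_trancl: "(x, y) \<in> A\<^sup>+ \<Longrightarrow> ranked A r \<Longrightarrow> r x < r y"
  unfolding ranked_def by (induction rule: trancl_induct) fastforce+

lemma ranked_acyclic: "ranked A r \<Longrightarrow> acyclic A"
  unfolding acyclic_def by (meson ranked_trancl less_irrefl)

lemma ranked_converse: "ranked A r \<Longrightarrow> ranked (A\<inverse>) (\<lambda>v. - r v)"
  unfolding ranked_def by auto

lemma niche_realization_converse: "niche_realization U E A \<Longrightarrow> niche_realization U E (A\<inverse>)"
  unfolding niche_realization_def using ranked_converse by auto

lemma source_or_sink_converse [simp]: "source_or_sink (A\<inverse>) v \<longleftrightarrow> source_or_sink A v"
  by (auto simp: source_or_sink_def)

lemma source_or_sink_Un_outside:
  "A2 \<subseteq> U2 \<times> U2 \<Longrightarrow> v \<notin> U2 \<Longrightarrow> source_or_sink (A1 \<union> A2) v \<longleftrightarrow> source_or_sink A1 v"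
  by (simp add: source_or_sink_def in_nbh_outside out_nbh_outside)

text \<open>Shared vertices are placed at rank 0, strictly between the two parts.\<close>

lemma ranked_Un:
  assumes "finite U1" "finite U2" and A1: "A1 \<subseteq> U1 \<times> U1" and A2: "A2 \<subseteq> U2 \<times> U2"
    and r1: "ranked A1 r1" and r2: "ranked A2 r2"
    and shared: "\<And>v. v \<in> U1 \<Longrightarrow> v \<in> U2 \<Longrightarrow> out_nbh A1 v = {} \<and> in_nbh A2 v = {}"
  shows "ranked (A1 \<union> A2) (\<lambda>v. if v \<in> U1 \<inter> U2 then 0
           else if v \<in> U1 then r1 v - Max (r1 ` U1) - 1 else r2 v - Min (r2 ` U2) + 1)"
    (is "ranked _ ?r")
  unfolding ranked_def
proof (intro ballI, clarify)
  fix x y assume "(x, y) \<in> A1 \<union> A2"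
  then show "?r x < ?r y"
  proof
    assume xy: "(x, y) \<in> A1"
    with A1 have "x \<in> U1" "y \<in> U1" by auto
    moreover have "x \<notin> U2" using xy shared \<open>x \<in> U1\<close> by (auto simp: out_nbh_def)
    moreover have "r1 x < r1 y" "r1 y \<le> Max (r1 ` U1)"
      using xy r1 \<open>y \<in> U1\<close> \<open>finite U1\<close> by (auto simp: ranked_def)
    ultimately show ?thesis by auto
  next
    assume xy: "(x, y) \<in> A2"
    with A2 have "x \<in> U2" "y \<in> U2" by auto
    moreover have "y \<notin> U1" using xy shared \<open>y \<in> U2\<close> by (auto simp: in_nbh_def)
    moreover have "r2 x < r2 y" "Min (r2 ` U2) \<le> r2 x"
      using xy r2 \<open>x \<in> U2\<close> \<open>finite U2\<close> by (auto simp: ranked_def)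
    ultimately show ?thesis by auto
  qed
qed

lemma niche_realization_Un:
  assumes R1: "niche_realization U1 E1 A1" and R2: "niche_realization U2 E2 A2"
    and shared: "\<And>v. v \<in> U1 \<Longrightarrow> v \<in> U2 \<Longrightarrow> out_nbh A1 v = {} \<and> in_nbh A2 v = {}"
  shows "niche_realization (U1 \<union> U2) (E1 \<union> E2) (A1 \<union> A2)"
proof -
  from R1 R2 obtain r1 r2 where "finite U1" "finite U2" "A1 \<subseteq> U1 \<times> U1" "A2 \<subseteq> U2 \<times> U2"
    "ranked A1 r1" "ranked A2 r2" "niche_edges U1 A1 = E1" "niche_edges U2 A2 = E2"
    unfolding niche_realization_def by blast
  with shared ranked_Un[of U1 U2 A1 A2 r1 r2] niche_edges_Un[of A1 U1 A2 U2] show ?thesis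
    unfolding niche_realization_def by blast
qed

lemma niche_realization_glue:
  assumes R1: "niche_realization U1 E1 A1" and R2: "niche_realization U2 E2 A2"
    and shared: "U1 \<inter> U2 \<subseteq> {z}"
    and z: "source_or_sink A1 z" "source_or_sink A2 z"
  obtains A where "niche_realization (U1 \<union> U2) (E1 \<union> E2) A"
    and "\<And>v. v \<in> U1 - U2 \<Longrightarrow> source_or_sink A v \<longleftrightarrow> source_or_sink A1 v"
    and "\<And>v. v \<in> U2 - U1 \<Longrightarrow> source_or_sink A v \<longleftrightarrow> source_or_sink A2 v"
proof -
  define B1 where "B1 = (if out_nbh A1 z = {} then A1 else A1\<inverse>)"
  define B2 where "B2 = (if in_nbh A2 z = {} then A2 else A2\<inverse>)"
  have R1': "niche_realization U1 E1 B1" and R2': "niche_realization U2 E2 B2"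
    using R1 R2 niche_realization_converse unfolding B1_def B2_def by auto
  then have "B1 \<subseteq> U1 \<times> U1" "B2 \<subseteq> U2 \<times> U2"
    unfolding niche_realization_def by auto
  have "out_nbh B1 v = {} \<and> in_nbh B2 v = {}" if "v \<in> U1" "v \<in> U2" for v
    using that shared z unfolding B1_def B2_def source_or_sink_def by auto
  then have "niche_realization (U1 \<union> U2) (E1 \<union> E2) (B1 \<union> B2)"
    by (rule niche_realization_Un[OF R1' R2'])
  moreover have "source_or_sink (B1 \<union> B2) v \<longleftrightarrow> source_or_sink A1 v" if "v \<in> U1 - U2" for v
    using that source_or_sink_Un_outside[OF \<open>B2 \<subseteq> U2 \<times> U2\<close>] by (simp add: B1_def)
  moreover have "source_or_sink (B1 \<union> B2) v \<longleftrightarrow> source_or_sink A2 v" if "v \<in> U2 - U1" for v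
    using that source_or_sink_Un_outside[OF \<open>B1 \<subseteq> U1 \<times> U1\<close>, of v B2] by (simp add: B2_def Un_commute)
  ultimately show thesis by (rule that)
qed

lemma niche_realization_has_sink:
  assumes "niche_realization U E A" and "U \<noteq> {}"
  obtains v where "v \<in> U" and "out_nbh A v = {}"
proof -
  from assms obtain r where "finite U" "A \<subseteq> U \<times> U" "ranked A r"
    unfolding niche_realization_def by blast
  have "Max (r ` U) \<in> r ` U"
    using \<open>finite U\<close> \<open>U \<noteq> {}\<close> by simp
  then obtain v where v: "v \<in> U" "r v = Max (r ` U)" by auto
  have "out_nbh A v = {}"
  proof (rule ccontr)
    assume "out_nbh A v \<noteq> {}"
    then obtain w where "(v, w) \<in> A" by (auto simp: out_nbh_def)
    with \<open>A \<subseteq> U \<times> U\<close> \<open>ranked A r\<close> have "w \<in> U" "r v < r w" by (auto simp: ranked_def)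
    moreover have "r w \<le> Max (r ` U)"
      using \<open>w \<in> U\<close> \<open>finite U\<close> by simp
    ultimately show False using v(2) by simp
  qed
  with v(1) show thesis by (rule that)
qed

lemma niche_realization_fan:
  assumes "v \<notin> s" "finite s" "2 \<le> card s"
  shows "niche_realization (insert v s) {s} ({v} \<times> s)"
proof -
  have "ranked ({v} \<times> s) (\<lambda>w. if w = v then 0 else 1)"
    using assms(1) unfolding ranked_def by auto
  moreover have "niche_edges (insert v s) ({v} \<times> s) = {s}"
  proof (rule niche_edges_eqI)
    show "e \<subseteq> insert v s \<and> 2 \<le> card e \<and> (\<exists>w\<in>insert v s. e = in_nbh ({v} \<times> s) w \<or> e = out_nbh ({v} \<times> s) w)"
      if "e \<in> {s}" for e
      using that assms by auto
  qed (auto split: if_splits)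
  ultimately show ?thesis
    using assms unfolding niche_realization_def by blast
qed

text \<open>A hyperedge disjoint from a realization becomes the out-neighbourhood of a sink.\<close>

lemma niche_realization_insert_disjoint:
  assumes R: "niche_realization U E A" and "U \<noteq> {}"
    and s: "s \<inter> U = {}" "finite s" "2 \<le> card s"
  obtains A' where "niche_realization (U \<union> s) (insert s E) A'"
proof -
  obtain v where v: "v \<in> U" "out_nbh A v = {}"
    using niche_realization_has_sink[OF R \<open>U \<noteq> {}\<close>] .
  with s have "v \<notin> s" by auto
  have "U \<inter> insert v s \<subseteq> {v}" "source_or_sink A v" "source_or_sink ({v} \<times> s) v"
    using s v \<open>v \<notin> s\<close> by (auto simp: source_or_sink_def)
  then obtain A' where "niche_realization (U \<union> insert v s) (E \<union> {s}) A'"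
    using niche_realization_glue[OF R niche_realization_fan[OF \<open>v \<notin> s\<close> s(2,3)]] by blast
  moreover have "U \<union> insert v s = U \<union> s" using v by auto
  ultimately show thesis using that by simp
qed

lemma niche_realization_acyclic_digraph:
  assumes "niche_realization U E A" and "U \<subseteq> V"
  shows "acyclic_digraph V A \<and> niche_edges V A = E"
proof -
  from assms obtain r where A: "A \<subseteq> U \<times> U" "ranked A r" "niche_edges U A = E"
    unfolding niche_realization_def by blast
  have "r u < r v" if "(u, v) \<in> A" for u v
    using that \<open>ranked A r\<close> unfolding ranked_def by auto
  then have "(v, u) \<notin> A" if "(u, v) \<in> A" for u v
    using that by (metis less_asym)
  moreover have "A \<subseteq> V \<times> V"
    using A(1) \<open>U \<subseteq> V\<close> by blast
  ultimately have "digraph V A"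
    unfolding digraph_def by blast
  with A show ?thesis
    using ranked_acyclic niche_edges_mono_vertices[OF A(1) \<open>U \<subseteq> V\<close>]
    unfolding acyclic_digraph_def by blast
qed

section \<open>Realizing stars\<close>

lemma niche_realization_attach_leaf:
  assumes R: "niche_realization U E A" and r: "ranked A r"
    and x: "x \<in> U" "out_nbh A x = {}" and u: "u \<in> U" "in_nbh A u = {}" "r x < r u"
    and Z: "Z \<inter> U = {}" "finite Z" "Z \<noteq> {}"
  shows "niche_realization (U \<union> Z) (insert (insert x Z) E) (A \<union> insert x Z \<times> {u})"
    and "ranked (A \<union> insert x Z \<times> {u}) (\<lambda>v. if v \<in> Z then (r x + r u) / 2 else r v)"
proof -
  from R have U: "finite U" "A \<subseteq> U \<times> U" "niche_edges U A = E"
    unfolding niche_realization_def by auto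
  have "x \<notin> Z" "u \<notin> Z" "u \<noteq> x" using x u Z by auto
  moreover have "0 < card Z" using Z(2,3) by (simp add: card_gt_0_iff)
  ultimately have "2 \<le> card (insert x Z)"
    using Z(2) by simp
  then have "niche_edges (insert u (insert x Z)) ({u} \<times> insert x Z) = {insert x Z}"
    using niche_realization_fan[of u "insert x Z"] \<open>u \<notin> Z\<close> \<open>u \<noteq> x\<close> Z(2)
    unfolding niche_realization_def by auto
  then have fan: "niche_edges (insert u (insert x Z)) (insert x Z \<times> {u}) = {insert x Z}"
    by (metis converse_Times niche_edges_converse)
  have "niche_edges (U \<union> insert u (insert x Z)) (A \<union> insert x Z \<times> {u})
      = niche_edges U A \<union> niche_edges (insert u (insert x Z)) (insert x Z \<times> {u})"
  proof (rule niche_edges_Un[OF U(2)])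
    show "insert x Z \<times> {u} \<subseteq> insert u (insert x Z) \<times> insert u (insert x Z)" by auto
    fix v assume "v \<in> U" "v \<in> insert u (insert x Z)"
    with Z(1) have "v = u \<or> v = x" by auto
    then show "(in_nbh A v = {} \<or> in_nbh (insert x Z \<times> {u}) v = {}) \<and>
      (out_nbh A v = {} \<or> out_nbh (insert x Z \<times> {u}) v = {})"
      using x u \<open>u \<noteq> x\<close> \<open>u \<notin> Z\<close> by (auto simp: in_nbh_def out_nbh_def)
  qed
  moreover have "U \<union> insert u (insert x Z) = U \<union> Z" using x u by auto
  moreover show ranked: "ranked (A \<union> insert x Z \<times> {u}) (\<lambda>v. if v \<in> Z then (r x + r u) / 2 else r v)"
    using r U(2) Z(1) u(3) \<open>x \<notin> Z\<close> \<open>u \<notin> Z\<close> unfolding ranked_def by fastforce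
  ultimately show "niche_realization (U \<union> Z) (insert (insert x Z) E) (A \<union> insert x Z \<times> {u})"
    using U fan x u Z unfolding niche_realization_def by auto
qed

text \<open>\<open>c\<close> is the out-neighbourhood of \<open>a\<close> and \<open>f\<close> the in-neighbourhood of \<open>b\<close>; as
  \<open>a \<in> f\<close> and \<open>b \<in> c\<close>, the arc \<open>(a, b)\<close> serves both, so \<open>a\<close> is a source and \<open>b\<close> a sink.\<close>

lemma pair_gadget:
  assumes "finite c" "finite f" "c \<inter> f = {x}" "a \<in> f" "a \<noteq> x" "b \<in> c" "b \<noteq> x"
    and "2 \<le> card c" "2 \<le> card f"
  defines "A \<equiv> {a} \<times> c \<union> f \<times> {b}"
  shows "niche_realization (c \<union> f) {c, f} A"
    and "\<And>v. v \<in> (c - f) \<union> (f - c) \<Longrightarrow> source_or_sink A v"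
proof -
  have "a \<notin> c" "b \<notin> f" using assms(3-7) by auto
  have in_A: "in_nbh A v = (if v = b then f else if v \<in> c then {a} else {})" for v
    using \<open>a \<in> f\<close> \<open>b \<in> c\<close> unfolding A_def by auto
  have out_A: "out_nbh A v = (if v = a then c else if v \<in> f then {b} else {})" for v
    using \<open>a \<in> f\<close> \<open>b \<in> c\<close> \<open>a \<notin> c\<close> unfolding A_def by auto
  have "ranked A (\<lambda>v. if v = b then 2 else if v \<in> c then 1 else 0)"
    using \<open>a \<notin> c\<close> \<open>b \<notin> f\<close> \<open>b \<in> c\<close> unfolding ranked_def A_def by auto
  moreover have "niche_edges (c \<union> f) A = {c, f}"
  proof (rule niche_edges_eqI)
    have "c = out_nbh A a" "f = in_nbh A b" by (simp_all add: in_A out_A)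
    then show "e \<subseteq> c \<union> f \<and> 2 \<le> card e \<and> (\<exists>v\<in>c \<union> f. e = in_nbh A v \<or> e = out_nbh A v)"
      if "e \<in> {c, f}" for e
      using that assms(4,6,8,9) by blast
  qed (auto simp: in_A out_A split: if_splits)
  moreover have "A \<subseteq> (c \<union> f) \<times> (c \<union> f)"
    using assms(4,6) unfolding A_def by auto
  ultimately show "niche_realization (c \<union> f) {c, f} A"
    using assms(1,2) unfolding niche_realization_def by blast
  show "source_or_sink A v" if "v \<in> (c - f) \<union> (f - c)" for v
    using that \<open>a \<notin> c\<close> \<open>b \<in> c\<close> unfolding source_or_sink_def in_A out_A by auto
qed

text \<open>\<open>c\<close> is the out-neighbourhood of \<open>a\<close>, \<open>f0\<close> that of \<open>x1\<close>, and \<open>f1\<close> the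
  in-neighbourhood of \<open>x0\<close>; the arcs \<open>(a, x0)\<close> and \<open>(x1, x0)\<close> each serve two of them.
  The spare source \<open>b\<close>, ranked above the free vertices of \<open>c\<close>, is used to attach further
  leaves.\<close>

lemma three_edge_gadget:
  assumes "finite c" "finite f0" "finite f1"
    and "c \<inter> f0 = {x0}" "c \<inter> f1 = {x1}" "f0 \<inter> f1 = {}"
    and "a \<in> f1" "b \<in> f1" "a \<noteq> x1" "b \<noteq> x1" "a \<noteq> b"
    and "2 \<le> card c" "2 \<le> card f0" "2 \<le> card f1"
  defines "A \<equiv> {a} \<times> c \<union> {x1} \<times> f0 \<union> f1 \<times> {x0}"
    and "r \<equiv> \<lambda>v. if v = a then 0 else if v = x1 then 1 else if v = x0 then 3
      else if v \<in> f1 then 5 / 2 else (2::real)"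
  shows "niche_realization (c \<union> f0 \<union> f1) {c, f0, f1} A" and "ranked A r"
    and "in_nbh A b = {}" and "r b = 5 / 2"
    and "\<And>y. y \<in> c - (f0 \<union> f1) \<Longrightarrow> out_nbh A y = {} \<and> r y = 2"
    and "\<And>v. v \<in> f0 - c \<Longrightarrow> out_nbh A v = {}"
proof -
  have x0: "x0 \<in> c" "x0 \<in> f0" "x0 \<notin> f1" and x1: "x1 \<in> c" "x1 \<in> f1" "x1 \<notin> f0"
    using assms(4-6) by auto
  have "a \<notin> c" "a \<notin> f0" "b \<notin> c" "b \<notin> f0"
    using assms(5-10) by auto
  have in_A: "in_nbh A v = (if v = x0 then f1 else if v \<in> f0 then {x1} else if v \<in> c then {a} else {})" for v
    using x0 x1 assms(4,7) unfolding A_def by auto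
  have out_A: "out_nbh A v = (if v = a then c else if v = x1 then f0 else if v \<in> f1 then {x0} else {})" for v
    using x0 x1 \<open>a \<notin> c\<close> assms(7,9) unfolding A_def by auto
  have "r v < r w" if "(v, w) \<in> A" for v w
  proof -
    from that consider "v = a" "w \<in> c" | "v = x1" "w \<in> f0" | "v \<in> f1" "w = x0"
      unfolding A_def by blast
    then show ?thesis
    proof cases
      case 1
      with \<open>a \<notin> c\<close> show ?thesis by (auto simp: r_def)
    next
      case 2
      with \<open>a \<notin> f0\<close> x1 assms(6,9) show ?thesis by (auto simp: r_def)
    next
      case 3
      with x0 x1 \<open>a \<notin> c\<close> show ?thesis by (auto simp: r_def)
    qed
  qed
  then show "ranked A r"
    unfolding ranked_def by blast
  moreover have "niche_edges (c \<union> f0 \<union> f1) A = {c, f0, f1}"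
  proof (rule niche_edges_eqI)
    fix e assume "e \<in> {c, f0, f1}"
    moreover have "c = out_nbh A a" "f0 = out_nbh A x1" "f1 = in_nbh A x0"
      using assms(9) by (simp_all add: in_A out_A)
    ultimately have "\<exists>v\<in>c \<union> f0 \<union> f1. e = in_nbh A v \<or> e = out_nbh A v"
      using x0 x1 assms(7) by auto
    with \<open>e \<in> {c, f0, f1}\<close> assms(12-14)
    show "e \<subseteq> c \<union> f0 \<union> f1 \<and> 2 \<le> card e \<and> (\<exists>v\<in>c \<union> f0 \<union> f1. e = in_nbh A v \<or> e = out_nbh A v)"
      by auto
  qed (auto simp: in_A out_A split: if_splits)
  moreover have "A \<subseteq> (c \<union> f0 \<union> f1) \<times> (c \<union> f0 \<union> f1)"
    using x0 x1 assms(7) unfolding A_def by auto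
  ultimately show "niche_realization (c \<union> f0 \<union> f1) {c, f0, f1} A"
    using assms(1-3) unfolding niche_realization_def by blast
  show "in_nbh A b = {}" "r b = 5 / 2"
    using x0 \<open>b \<notin> c\<close> \<open>b \<notin> f0\<close> assms(8,10,11) by (auto simp: in_A r_def)
  show "out_nbh A y = {} \<and> r y = 2" if "y \<in> c - (f0 \<union> f1)" for y
    using that x0 x1 \<open>a \<notin> c\<close> by (auto simp: out_A r_def)
  show "out_nbh A v = {}" if "v \<in> f0 - c" for v
    using that x1 \<open>a \<notin> f0\<close> assms(6) by (auto simp: out_A)
qed

lemma obtain_other_element:
  assumes "2 \<le> card s"
  obtains b where "b \<in> s" "b \<noteq> x"
proof -
  have "\<not> s \<subseteq> {x}"
    using assms card_mono[of "{x}" s] by auto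
  with that show thesis by blast
qed

lemma obtain_two_other_elements:
  assumes "finite s" "3 \<le> card s"
  obtains a b where "a \<in> s" "b \<in> s" "a \<noteq> x" "b \<noteq> x" "a \<noteq> b"
proof -
  have "2 \<le> card (s - {x})"
    using assms by (auto simp: card_Diff_singleton_if)
  then obtain a where "a \<in> s - {x}"
    using obtain_other_element[of "s - {x}" x] by blast
  moreover obtain b where "b \<in> s - {x}" "b \<noteq> a"
    using obtain_other_element[OF \<open>2 \<le> card (s - {x})\<close>, of a] by blast
  ultimately show thesis using that by blast
qed

text \<open>The new leaf becomes the in-neighbourhood of the spare source \<open>u\<close>, and its vertices
  outside \<open>c\<close> are new spare sources.\<close>

lemma star_add_leaf:
  assumes R: "niche_realization (c \<union> \<Union>S) (insert c S) A" and r: "ranked A r"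
    and u: "u \<in> \<Union>S" "u \<notin> c" "in_nbh A u = {}" "2 < r u"
    and free: "\<And>y. y \<in> c - \<Union>S \<Longrightarrow> out_nbh A y = {} \<and> r y = 2"
    and l: "c \<inter> l = {x}" "l \<inter> \<Union>S = {}" "finite l" "2 \<le> card l"
  obtains A' r' u' where "niche_realization (c \<union> \<Union>(insert l S)) (insert c (insert l S)) A'"
    and "ranked A' r'" and "u' \<in> \<Union>(insert l S)" "u' \<notin> c" "in_nbh A' u' = {}" "2 < r' u'"
    and "\<And>y. y \<in> c - \<Union>(insert l S) \<Longrightarrow> out_nbh A' y = {} \<and> r' y = 2"
    and "\<And>v. v \<notin> l \<Longrightarrow> out_nbh A' v = out_nbh A v"
proof -
  define Z where "Z = l - {x}"
  have "x \<in> l" "x \<in> c" using l(1) by auto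
  with l(2) have "x \<in> c - \<Union>S" by blast
  with free have x: "x \<in> c \<union> \<Union>S" "out_nbh A x = {}" "r x = 2" by auto
  have l_eq: "insert x Z = l" using \<open>x \<in> l\<close> unfolding Z_def by auto
  have Z: "Z \<inter> (c \<union> \<Union>S) = {}" "finite Z"
    using l unfolding Z_def by auto
  have "Z \<noteq> {}"
    using obtain_other_element[OF l(4), of x] unfolding Z_def by blast
  then obtain u' where "u' \<in> Z" by blast
  have "u \<in> c \<union> \<Union>S" "r x < r u" using u x by auto
  note attach = niche_realization_attach_leaf[OF R r x(1,2) this(1) u(3) this(2) Z \<open>Z \<noteq> {}\<close>]
  define A' where "A' = A \<union> l \<times> {u}"
  define r' where "r' = (\<lambda>v. if v \<in> Z then (r x + r u) / 2 else r v)"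
  have "c \<union> \<Union>S \<union> Z = c \<union> \<Union>(insert l S)" "insert l (insert c S) = insert c (insert l S)"
    using l_eq \<open>x \<in> c\<close> by auto
  with attach have "niche_realization (c \<union> \<Union>(insert l S)) (insert c (insert l S)) A'" "ranked A' r'"
    unfolding A'_def r'_def l_eq by simp_all
  moreover have "u' \<in> \<Union>(insert l S)" "u' \<notin> c"
    using \<open>u' \<in> Z\<close> Z(1) unfolding Z_def by auto
  moreover have "in_nbh A' u' = {}"
    using \<open>u' \<in> Z\<close> Z(1) u(1) R in_nbh_outside[of A "c \<union> \<Union>S" u']
    unfolding A'_def niche_realization_def by auto
  moreover have "2 < r' u'"
    using \<open>u' \<in> Z\<close> x(3) u(4) unfolding r'_def by auto
  moreover have "out_nbh A' y = {} \<and> r' y = 2" if "y \<in> c - \<Union>(insert l S)" for y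
    using that free[of y] Z(1) unfolding A'_def r'_def by auto
  moreover have "out_nbh A' v = out_nbh A v" if "v \<notin> l" for v
    using that unfolding A'_def by simp
  ultimately show thesis by (rule that)
qed

lemma star_add_leaves:
  assumes "finite R"
    and R: "niche_realization (c \<union> \<Union>S) (insert c S) A" and r: "ranked A r"
    and u: "u \<in> \<Union>S" "u \<notin> c" "in_nbh A u = {}" "2 < r u"
    and free: "\<And>y. y \<in> c - \<Union>S \<Longrightarrow> out_nbh A y = {} \<and> r y = 2"
    and leaves: "\<And>l. l \<in> R \<Longrightarrow> finite l \<and> 2 \<le> card l \<and> (\<exists>x. c \<inter> l = {x}) \<and> l \<inter> \<Union>S = {}"
    and disjoint: "\<And>l l'. l \<in> R \<Longrightarrow> l' \<in> R \<Longrightarrow> l \<noteq> l' \<Longrightarrow> l \<inter> l' = {}"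
  obtains A' where "niche_realization (c \<union> \<Union>(R \<union> S)) (insert c (R \<union> S)) A'"
    and "\<And>y. y \<in> c - \<Union>(R \<union> S) \<Longrightarrow> out_nbh A' y = {}"
    and "\<And>v. v \<notin> \<Union>R \<Longrightarrow> out_nbh A' v = out_nbh A v"
proof -
  have "\<exists>A' r' u'. niche_realization (c \<union> \<Union>(R \<union> S)) (insert c (R \<union> S)) A' \<and> ranked A' r'
    \<and> u' \<in> \<Union>(R \<union> S) \<and> u' \<notin> c \<and> in_nbh A' u' = {} \<and> 2 < r' u'
    \<and> (\<forall>y\<in>c - \<Union>(R \<union> S). out_nbh A' y = {} \<and> r' y = 2)
    \<and> (\<forall>v. v \<notin> \<Union>R \<longrightarrow> out_nbh A' v = out_nbh A v)"
    using \<open>finite R\<close> leaves disjoint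
  proof (induction R rule: finite_induct)
    case empty
    have "\<forall>y\<in>c - \<Union>S. out_nbh A y = {} \<and> r y = 2" using free by blast
    with R r u show ?case by simp blast
  next
    case (insert l R)
    have leaves_R: "\<And>l'. l' \<in> R \<Longrightarrow> finite l' \<and> 2 \<le> card l' \<and> (\<exists>x. c \<inter> l' = {x}) \<and> l' \<inter> \<Union>S = {}"
      using insert.prems(1) by (meson insertCI)
    have disjoint_R: "\<And>l' l''. l' \<in> R \<Longrightarrow> l'' \<in> R \<Longrightarrow> l' \<noteq> l'' \<Longrightarrow> l' \<inter> l'' = {}"
      using insert.prems(2) by (meson insertCI)
    from insert.IH[OF leaves_R disjoint_R] obtain A' r' u' where IH: "niche_realization (c \<union> \<Union>(R \<union> S)) (insert c (R \<union> S)) A'"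
      "ranked A' r'" "u' \<in> \<Union>(R \<union> S)" "u' \<notin> c" "in_nbh A' u' = {}" "2 < r' u'"
      "\<And>y. y \<in> c - \<Union>(R \<union> S) \<Longrightarrow> out_nbh A' y = {} \<and> r' y = 2"
      "\<And>v. v \<notin> \<Union>R \<Longrightarrow> out_nbh A' v = out_nbh A v"
      by blast
    from insert.prems(1)[of l] obtain x where l: "c \<inter> l = {x}" "finite l" "2 \<le> card l" "l \<inter> \<Union>S = {}"
      by auto
    have "l \<inter> l' = {}" if "l' \<in> R" for l'
      using insert.prems(2)[of l l'] that insert.hyps(2) by auto
    then have "l \<inter> \<Union>R = {}" by blast
    with l have "l \<inter> \<Union>(R \<union> S) = {}" by auto
    obtain A'' r'' u'' where
      new: "niche_realization (c \<union> \<Union>(insert l R \<union> S)) (insert c (insert l R \<union> S)) A''"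
      "ranked A'' r''" "u'' \<in> \<Union>(insert l R \<union> S)" "u'' \<notin> c" "in_nbh A'' u'' = {}" "2 < r'' u''"
      and free': "\<And>y. y \<in> c - \<Union>(insert l R \<union> S) \<Longrightarrow> out_nbh A'' y = {} \<and> r'' y = 2"
      and preserved: "\<And>v. v \<notin> l \<Longrightarrow> out_nbh A'' v = out_nbh A' v"
      using star_add_leaf[OF IH(1-7) l(1) \<open>l \<inter> \<Union>(R \<union> S) = {}\<close> l(2,3)] by (metis Un_insert_left)
    have "\<forall>y\<in>c - \<Union>(insert l R \<union> S). out_nbh A'' y = {} \<and> r'' y = 2"
      using free' by blast
    moreover have "\<forall>v. v \<notin> \<Union>(insert l R) \<longrightarrow> out_nbh A'' v = out_nbh A v"
      using preserved IH(8) by simp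
    ultimately show ?case
      using new by blast
  qed
  with that show thesis by blast
qed

lemma star_realization_two_leaves:
  assumes "finite L" "f0 \<in> L" "f1 \<in> L" "f1 \<noteq> f0" "finite c" "2 \<le> card c"
    and leaves: "\<And>l. l \<in> L \<Longrightarrow> finite l \<and> 3 \<le> card l \<and> (\<exists>x. c \<inter> l = {x})"
    and disjoint: "\<And>l l'. l \<in> L \<Longrightarrow> l' \<in> L \<Longrightarrow> l \<noteq> l' \<Longrightarrow> l \<inter> l' = {}"
  obtains A where "niche_realization (c \<union> \<Union>L) (insert c L) A"
    and "\<And>v. v \<in> (c - \<Union>L) \<union> (f0 - c) \<Longrightarrow> source_or_sink A v"
proof -
  obtain x0 x1 where x0: "c \<inter> f0 = {x0}" "finite f0" "3 \<le> card f0"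
    and x1: "c \<inter> f1 = {x1}" "finite f1" "3 \<le> card f1"
    using leaves[OF \<open>f0 \<in> L\<close>] leaves[OF \<open>f1 \<in> L\<close>] by blast
  obtain a b where ab: "a \<in> f1" "b \<in> f1" "a \<noteq> x1" "b \<noteq> x1" "a \<noteq> b"
    using obtain_two_other_elements[OF x1(2,3)] by metis
  have "f0 \<inter> f1 = {}" "2 \<le> card f0" "2 \<le> card f1"
    using disjoint assms(2-4) x0 x1 by auto
  from three_edge_gadget[OF \<open>finite c\<close> x0(2) x1(2) x0(1) x1(1) this(1) ab \<open>2 \<le> card c\<close> this(2,3)]
  obtain A0 r0 where gadget: "niche_realization (c \<union> f0 \<union> f1) {c, f0, f1} A0" "ranked A0 r0"
    "in_nbh A0 b = {}" "r0 b = 5 / 2" "\<And>y. y \<in> c - (f0 \<union> f1) \<Longrightarrow> out_nbh A0 y = {} \<and> r0 y = 2"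
    "\<And>v. v \<in> f0 - c \<Longrightarrow> out_nbh A0 v = {}"
    by blast
  define S where "S = {f0, f1}"
  have base: "niche_realization (c \<union> \<Union>S) (insert c S) A0"
    using gadget(1) unfolding S_def by (simp add: Un_assoc)
  have "b \<in> \<Union>S" "b \<notin> c" "2 < r0 b" using ab x1 gadget(4) unfolding S_def by auto
  have free: "out_nbh A0 y = {} \<and> r0 y = 2" if "y \<in> c - \<Union>S" for y
    using that gadget(5) unfolding S_def by auto
  have leaves': "finite l \<and> 2 \<le> card l \<and> (\<exists>x. c \<inter> l = {x}) \<and> l \<inter> \<Union>S = {}" if "l \<in> L - S" for l
    using that leaves[of l] disjoint \<open>f0 \<in> L\<close> \<open>f1 \<in> L\<close> unfolding S_def by auto
  have "finite (L - S)" using \<open>finite L\<close> by simp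
  obtain A where A: "niche_realization (c \<union> \<Union>(L - S \<union> S)) (insert c (L - S \<union> S)) A"
    "\<And>y. y \<in> c - \<Union>(L - S \<union> S) \<Longrightarrow> out_nbh A y = {}"
    "\<And>v. v \<notin> \<Union>(L - S) \<Longrightarrow> out_nbh A v = out_nbh A0 v"
    by (rule star_add_leaves[OF \<open>finite (L - S)\<close> base gadget(2) \<open>b \<in> \<Union>S\<close> \<open>b \<notin> c\<close> gadget(3)
          \<open>2 < r0 b\<close> free leaves']) (use disjoint in auto)
  have L: "L - S \<union> S = L" using \<open>f0 \<in> L\<close> \<open>f1 \<in> L\<close> unfolding S_def by auto
  have "v \<notin> \<Union>(L - S)" if "v \<in> f0" for v
    using that disjoint \<open>f0 \<in> L\<close> unfolding S_def by blast
  with A(2,3) gadget(6) have "source_or_sink A v" if "v \<in> (c - \<Union>L) \<union> (f0 - c)" for v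
    using that unfolding L source_or_sink_def by auto
  with A(1) show thesis unfolding L by (rule that)
qed

lemma star_realization:
  assumes "finite L" "f0 \<in> L" "finite c" "2 \<le> card c"
    and leaves: "\<And>l. l \<in> L \<Longrightarrow> finite l \<and> 3 \<le> card l \<and> (\<exists>x. c \<inter> l = {x})"
    and disjoint: "\<And>l l'. l \<in> L \<Longrightarrow> l' \<in> L \<Longrightarrow> l \<noteq> l' \<Longrightarrow> l \<inter> l' = {}"
  obtains A where "niche_realization (c \<union> \<Union>L) (insert c L) A"
    and "\<And>v. v \<in> (c - \<Union>L) \<union> (f0 - c) \<Longrightarrow> source_or_sink A v"
proof (cases "L = {f0}")
  case True
  obtain x0 where x0: "c \<inter> f0 = {x0}" and f0: "finite f0" "3 \<le> card f0"
    using leaves[OF \<open>f0 \<in> L\<close>] by blast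
  obtain a where "a \<in> f0" "a \<noteq> x0"
    using obtain_two_other_elements[OF f0] by metis
  obtain b where "b \<in> c" "b \<noteq> x0"
    using obtain_other_element[OF \<open>2 \<le> card c\<close>] by metis
  note pair = pair_gadget[OF \<open>finite c\<close> f0(1) x0 \<open>a \<in> f0\<close> \<open>a \<noteq> x0\<close> \<open>b \<in> c\<close> \<open>b \<noteq> x0\<close>
      \<open>2 \<le> card c\<close>]
  show thesis
    by (rule that) (use pair f0(2) True in auto)
next
  case False
  then obtain f1 where "f1 \<in> L" "f1 \<noteq> f0" using \<open>f0 \<in> L\<close> by blast
  show thesis
    by (rule star_realization_two_leaves[OF assms(1,2) \<open>f1 \<in> L\<close> \<open>f1 \<noteq> f0\<close> assms(3,4) leaves
          disjoint]) (assumption | rule that)+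
qed

section \<open>Line graphs of linear hypergraphs of degree two\<close>

definition line_adj :: "'a set set \<Rightarrow> ('a set \<times> 'a set) set" where
  "line_adj E = {(e, f). e \<in> E \<and> f \<in> E \<and> e \<noteq> f \<and> e \<inter> f \<noteq> {}}"

definition line_nbrs :: "'a set set \<Rightarrow> 'a set \<Rightarrow> 'a set set" where
  "line_nbrs E e = {f \<in> E. f \<noteq> e \<and> f \<inter> e \<noteq> {}}"

text \<open>The line graph is a forest: each of its edges is a bridge.\<close>

definition line_forest :: "'a set set \<Rightarrow> bool" where
  "line_forest E \<longleftrightarrow> (\<forall>(p, q)\<in>line_adj E. (q, p) \<notin> (line_adj E - {(p, q), (q, p)})\<^sup>*)"

definition forest_hg :: "'a set set \<Rightarrow> bool" where
  "forest_hg E \<longleftrightarrow> finite E \<and> (\<forall>e\<in>E. finite e \<and> 3 \<le> card e) \<and> linear_hg E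
     \<and> (\<forall>v. hdegree E v \<le> 2) \<and> line_forest E"

lemma line_adj_iff: "(e, f) \<in> line_adj E \<longleftrightarrow> e \<in> E \<and> f \<in> line_nbrs E e"
  by (auto simp: line_adj_def line_nbrs_def)

lemma line_nbrs_sym: "g \<in> E \<Longrightarrow> h \<in> line_nbrs E g \<Longrightarrow> g \<in> line_nbrs E h"
  by (auto simp: line_nbrs_def)

lemma line_nbrs_subset: "A \<subseteq> E \<Longrightarrow> line_nbrs A a = line_nbrs E a \<inter> A"
  by (auto simp: line_nbrs_def)

lemma hdegree_subset_eq:
  assumes "A \<subseteq> E" and "\<And>e. e \<in> E - A \<Longrightarrow> v \<notin> e"
  shows "hdegree A v = hdegree E v"
proof -
  have "{e \<in> A. v \<in> e} = {e \<in> E. v \<in> e}" using assms by blast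
  then show ?thesis by (simp add: hdegree_def)
qed

lemma hdegree_mono: "finite E \<Longrightarrow> A \<subseteq> E \<Longrightarrow> hdegree A v \<le> hdegree E v"
  unfolding hdegree_def by (rule card_mono) auto

lemma linear_hg_inter:
  assumes "linear_hg E" "e \<in> E" "f \<in> E" "e \<noteq> f" "finite e" "u \<in> e \<inter> f" "v \<in> e \<inter> f"
  shows "u = v"
proof -
  have "card (e \<inter> f) \<le> 1" using assms(1-4) unfolding linear_hg_def by blast
  with assms(5-7) show ?thesis by (metis card_le_Suc0_iff_eq finite_Int One_nat_def)
qed

lemma hdegree_le_two_third_edge:
  assumes "finite E" "hdegree E v \<le> 2" "e \<in> E" "f \<in> E" "h \<in> E" "e \<noteq> f" "v \<in> e" "v \<in> f" "v \<in> h"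
  shows "h = e \<or> h = f"
proof (rule ccontr)
  assume "\<not> (h = e \<or> h = f)"
  with assms(6) have "card {e, f, h} = 3" by (simp add: card_insert_if) fast
  moreover have "{e, f, h} \<subseteq> {x \<in> E. v \<in> x}" using assms(3-5,7-9) by auto
  ultimately show False
    using assms(1,2) card_mono[of "{x \<in> E. v \<in> x}" "{e, f, h}"] unfolding hdegree_def by simp
qed

lemma line_forest_subset:
  assumes "line_forest E" and "A \<subseteq> E"
  shows "line_forest A"
proof -
  have "(line_adj A - X)\<^sup>* \<subseteq> (line_adj E - X)\<^sup>*" for X
    by (rule rtrancl_mono) (use \<open>A \<subseteq> E\<close> in \<open>auto simp: line_adj_def\<close>)
  moreover have "line_adj A \<subseteq> line_adj E"
    using \<open>A \<subseteq> E\<close> by (auto simp: line_adj_def)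
  ultimately show ?thesis
    using assms(1) unfolding line_forest_def by blast
qed

lemma forest_hg_subset:
  assumes F: "forest_hg E" and "A \<subseteq> E"
  shows "forest_hg A"
proof -
  from F have "finite E" "hdegree E v \<le> 2" for v
    unfolding forest_hg_def by auto
  then have "hdegree A v \<le> 2" for v
    using hdegree_mono[OF \<open>finite E\<close> \<open>A \<subseteq> E\<close>, of v] by (meson le_trans)
  moreover have "finite A"
    using \<open>finite E\<close> \<open>A \<subseteq> E\<close> by (rule finite_subset[rotated])
  moreover have "linear_hg A" "\<forall>e\<in>A. finite e \<and> 3 \<le> card e"
    using F \<open>A \<subseteq> E\<close> unfolding forest_hg_def linear_hg_def by blast+
  moreover have "line_forest A"
    using F \<open>A \<subseteq> E\<close> line_forest_subset unfolding forest_hg_def by blast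
  ultimately show ?thesis
    unfolding forest_hg_def by blast
qed

lemma forest_hg_degree_two:
  assumes "forest_hg E" "e \<in> E" "f \<in> E" "h \<in> E" "e \<noteq> f" "v \<in> e" "v \<in> f" "v \<in> h"
  shows "h = e \<or> h = f"
  using hdegree_le_two_third_edge[of E v e f h] assms unfolding forest_hg_def by blast

lemma forest_hg_hdegree_two:
  assumes "forest_hg E" "e \<in> E" "f \<in> E" "e \<noteq> f" "v \<in> e" "v \<in> f"
  shows "hdegree E v = 2"
proof -
  have "{h \<in> E. v \<in> h} = {e, f}"
    using forest_hg_degree_two[OF assms(1-3) _ assms(4-6)] assms(2,3,5,6) by blast
  with assms(4) show ?thesis by (simp add: hdegree_def)
qed

lemma forest_hg_inter_singleton:
  assumes "forest_hg E" "e \<in> E" "f \<in> E" "e \<noteq> f" "e \<inter> f \<noteq> {}"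
  obtains z where "e \<inter> f = {z}"
  using linear_hg_inter[of E e f] assms unfolding forest_hg_def by blast

definition anchor :: "'a set set \<Rightarrow> 'a set \<Rightarrow> 'a set" where
  "anchor E g = (if is_singleton (line_nbrs E g) then the_elem (line_nbrs E g) else g)"

text \<open>The vertices that the induction keeps as sources or sinks, so that the parts it
  produces can be glued at them.\<close>

definition focus_vertices :: "'a set set \<Rightarrow> 'a set \<Rightarrow> 'a set" where
  "focus_vertices E g = {v \<in> g \<union> anchor E g. hdegree E v = 1}"

definition focused_realizable :: "'a set set \<Rightarrow> 'a set \<Rightarrow> bool" where
  "focused_realizable E g \<longleftrightarrow>
     (\<exists>A. niche_realization (\<Union>E) E A \<and> (\<forall>v\<in>focus_vertices E g. source_or_sink A v))"

lemma anchor_leaf: "line_nbrs E g = {p} \<Longrightarrow> anchor E g = p"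
  by (simp add: anchor_def)

lemma anchor_cases:
  obtains "anchor E g = g" "\<not> is_singleton (line_nbrs E g)" | "line_nbrs E g = {anchor E g}"
  unfolding anchor_def by (metis is_singleton_the_elem)

lemma anchor_in: "g \<in> E \<Longrightarrow> anchor E g \<in> E"
  by (cases E g rule: anchor_cases) (auto simp: line_nbrs_def)

lemma line_nbrs_anchor_ne:
  assumes "line_nbrs E g \<noteq> {}" "q \<noteq> g" "g \<in> E"
  shows "line_nbrs E (anchor E g) \<noteq> {q}"
proof (cases E g rule: anchor_cases)
  case 1
  with assms(1) show ?thesis by (auto simp: is_singleton_def)
next
  case 2
  then have "g \<in> line_nbrs E (anchor E g)"
    using line_nbrs_sym[OF assms(3)] by auto
  with assms(2) show ?thesis by auto
qed

lemma focus_vertices_subset: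
  assumes "A \<subseteq> E" "g \<in> A" "anchor E g \<in> A" "v \<in> g \<union> anchor E g" "hdegree A v = 1"
  shows "v \<in> focus_vertices A g"
proof (cases E g rule: anchor_cases)
  case 1
  with assms(4,5) show ?thesis by (simp add: focus_vertices_def)
next
  case 2
  then have "line_nbrs A g = {anchor E g}"
    using line_nbrs_subset[OF assms(1)] assms(3) by auto
  then have "anchor A g = anchor E g" by (rule anchor_leaf)
  with assms(4,5) show ?thesis by (simp add: focus_vertices_def)
qed

lemma line_component_split:
  assumes N: "\<forall>e\<in>E. line_nbrs E e \<noteq> {}" and "finite E" "g \<in> E"
    and e0: "e0 \<in> E" "(g, e0) \<notin> (line_adj E)\<^sup>*"
  obtains A B where "E = A \<union> B" "g \<in> A" "B \<noteq> {}" "card A < card E" "card B < card E"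
    "\<forall>a\<in>A. line_nbrs A a \<noteq> {}" "\<forall>b\<in>B. line_nbrs B b \<noteq> {}" "\<Union>A \<inter> \<Union>B = {}"
    "focus_vertices E g \<subseteq> focus_vertices A g"
proof -
  define A where "A = {e \<in> E. (g, e) \<in> (line_adj E)\<^sup>*}"
  define B where "B = E - A"
  have cross: "a \<inter> b = {}" if "a \<in> A" "b \<in> B" for a b
  proof (rule ccontr)
    assume "a \<inter> b \<noteq> {}"
    with that have "(a, b) \<in> line_adj E" unfolding A_def B_def line_adj_def by auto
    with that show False unfolding A_def B_def by (auto intro: rtrancl_into_rtrancl)
  qed
  have "A \<subseteq> E" unfolding A_def by auto
  have nbrs: "line_nbrs A a = line_nbrs E a" if "a \<in> A" for a
    using cross[OF that] \<open>A \<subseteq> E\<close> unfolding B_def line_nbrs_def by blast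
  have nbrsB: "line_nbrs B b = line_nbrs E b" if "b \<in> B" for b
    using cross[OF _ that] unfolding B_def line_nbrs_def by blast
  have "g \<in> A" "e0 \<in> B" using \<open>g \<in> E\<close> e0 unfolding A_def B_def by auto
  moreover have "card A < card E" "card B < card E"
    using \<open>finite E\<close> \<open>g \<in> A\<close> \<open>e0 \<in> B\<close> unfolding A_def B_def by (auto intro!: psubset_card_mono)
  moreover have "\<Union>A \<inter> \<Union>B = {}" using cross by blast
  moreover have "focus_vertices E g \<subseteq> focus_vertices A g"
  proof
    fix v assume v: "v \<in> focus_vertices E g"
    have "anchor E g \<in> line_nbrs E g \<or> anchor E g = g"
      by (cases E g rule: anchor_cases) auto
    moreover have "line_nbrs A g \<subseteq> A" by (auto simp: line_nbrs_def)
    ultimately have "anchor E g \<in> A"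
      using nbrs[OF \<open>g \<in> A\<close>] \<open>g \<in> A\<close> by auto
    with v \<open>g \<in> A\<close> have "v \<in> \<Union>A" by (auto simp: focus_vertices_def)
    with \<open>\<Union>A \<inter> \<Union>B = {}\<close> have "hdegree A v = hdegree E v"
      by (intro hdegree_subset_eq) (auto simp: A_def B_def)
    with v \<open>g \<in> A\<close> \<open>anchor E g \<in> A\<close> show "v \<in> focus_vertices A g"
      by (intro focus_vertices_subset[of A E]) (auto simp: A_def focus_vertices_def)
  qed
  moreover have "E = A \<union> B" "\<forall>a\<in>A. line_nbrs A a \<noteq> {}" "\<forall>b\<in>B. line_nbrs B b \<noteq> {}"
    using N nbrs nbrsB unfolding A_def B_def by auto
  ultimately show thesis
    using that \<open>g \<in> A\<close> \<open>e0 \<in> B\<close> by blast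
qed

lemma line_bridge_cut:
  assumes "line_forest E" and pq: "(p, q) \<in> line_adj E"
  defines "B \<equiv> {e. (q, e) \<in> (line_adj E - {(p, q), (q, p)})\<^sup>*}"
  shows "B \<subseteq> E" "q \<in> B" "p \<notin> B"
    and "\<And>a b. a \<in> E - B \<Longrightarrow> b \<in> B \<Longrightarrow> a \<inter> b \<noteq> {} \<Longrightarrow> a = p \<and> b = q"
proof -
  let ?R = "line_adj E - {(p, q), (q, p)}"
  have "q \<in> E" using pq by (auto simp: line_adj_def)
  show "B \<subseteq> E"
  proof
    fix e assume "e \<in> B"
    then have "(q, e) \<in> ?R\<^sup>*" by (simp add: B_def)
    then show "e \<in> E"
      by (induction rule: rtrancl_induct) (use \<open>q \<in> E\<close> in \<open>auto simp: line_adj_def\<close>)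
  qed
  show "q \<in> B" by (simp add: B_def)
  from assms(1) pq have "(q, p) \<notin> ?R\<^sup>*"
    unfolding line_forest_def by blast
  then show "p \<notin> B" by (simp add: B_def)
  fix a b assume ab: "a \<in> E - B" "b \<in> B" "a \<inter> b \<noteq> {}"
  with \<open>B \<subseteq> E\<close> have "(b, a) \<in> line_adj E"
    unfolding line_adj_def by blast
  moreover have "(b, a) \<notin> ?R"
    using ab unfolding B_def by (blast intro: rtrancl_into_rtrancl)
  ultimately have "(b, a) = (p, q) \<or> (b, a) = (q, p)" by blast
  with ab \<open>p \<notin> B\<close> show "a = p \<and> b = q" by auto
qed

lemma single_crossing_nonisolated:
  assumes "E = A \<union> B" "a \<in> A" "line_nbrs E a \<noteq> {}" "line_nbrs E p \<noteq> {q}"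
    and cross: "\<And>a b. a \<in> A \<Longrightarrow> b \<in> B \<Longrightarrow> a \<inter> b \<noteq> {} \<Longrightarrow> a = p \<and> b = q"
  shows "line_nbrs A a \<noteq> {}"
proof -
  have nbrs_A: "line_nbrs A a' = line_nbrs E a' \<inter> A" for a'
    using assms(1) by (intro line_nbrs_subset) auto
  obtain f where f: "f \<in> line_nbrs E a" using assms(3) by blast
  show ?thesis
  proof (cases "f \<in> A")
    case True
    with f nbrs_A show ?thesis by blast
  next
    case False
    with f assms(1) have "f \<in> B" "a \<inter> f \<noteq> {}" by (auto simp: line_nbrs_def)
    with cross \<open>a \<in> A\<close> have "a = p" "f = q" by blast+
    with f assms(4) obtain f' where f': "f' \<in> line_nbrs E a" "f' \<noteq> q" by blast
    then have "f' \<in> A"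
      using cross[of a f'] assms(1) \<open>a \<in> A\<close> by (auto simp: line_nbrs_def)
    with f' nbrs_A show ?thesis by blast
  qed
qed

lemma line_bridge_split:
  assumes F: "forest_hg E" and N: "\<forall>e\<in>E. line_nbrs E e \<noteq> {}"
    and "p \<in> E" "q \<in> line_nbrs E p" "line_nbrs E p \<noteq> {q}" "line_nbrs E q \<noteq> {p}"
  obtains A B z where "E = A \<union> B" "p \<in> A" "q \<in> B" "card A < card E" "card B < card E"
    "\<forall>a\<in>A. line_nbrs A a \<noteq> {}" "\<forall>b\<in>B. line_nbrs B b \<noteq> {}"
    "\<Union>A \<inter> \<Union>B = {z}" "z \<in> p" "z \<in> q" "hdegree A z = 1" "hdegree B z = 1"
    "\<And>v. v \<in> \<Union>A - {z} \<Longrightarrow> hdegree A v = hdegree E v"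
    "\<And>a b. a \<in> A \<Longrightarrow> b \<in> B \<Longrightarrow> a \<inter> b \<noteq> {} \<Longrightarrow> a = p \<and> b = q"
proof -
  have pq: "(p, q) \<in> line_adj E" using \<open>p \<in> E\<close> \<open>q \<in> line_nbrs E p\<close> by (simp add: line_adj_iff)
  have "line_forest E" "finite E" using F by (simp_all add: forest_hg_def)
  define B where "B = {e. (q, e) \<in> (line_adj E - {(p, q), (q, p)})\<^sup>*}"
  define A where "A = E - B"
  note cut = line_bridge_cut[OF \<open>line_forest E\<close> pq, folded B_def]
  have cross: "a = p \<and> b = q" if "a \<in> A" "b \<in> B" "a \<inter> b \<noteq> {}" for a b
    using cut(4) that unfolding A_def by blast
  have E: "E = A \<union> B" "A \<inter> B = {}" and "p \<in> A" "q \<in> B"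
    using cut(1-3) \<open>p \<in> E\<close> unfolding A_def by auto
  have "q \<in> E" "q \<noteq> p" "p \<inter> q \<noteq> {}" using \<open>q \<in> line_nbrs E p\<close> by (auto simp: line_nbrs_def)
  then obtain z where z: "p \<inter> q = {z}"
    using forest_hg_inter_singleton[OF F \<open>p \<in> E\<close>] by metis
  have only_pq: "e = p \<or> e = q" if "e \<in> E" "z \<in> e" for e
    using forest_hg_degree_two[OF F \<open>p \<in> E\<close> \<open>q \<in> E\<close> that(1)] \<open>q \<noteq> p\<close> z that(2) by auto
  have UAB: "\<Union>A \<inter> \<Union>B = {z}"
  proof
    show "\<Union>A \<inter> \<Union>B \<subseteq> {z}"
    proof
      fix v assume "v \<in> \<Union>A \<inter> \<Union>B"
      then obtain a b where "a \<in> A" "b \<in> B" "v \<in> a" "v \<in> b" by blast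
      with cross[of a b] z show "v \<in> {z}" by blast
    qed
    show "{z} \<subseteq> \<Union>A \<inter> \<Union>B" using z \<open>p \<in> A\<close> \<open>q \<in> B\<close> by blast
  qed
  have "{e \<in> A. z \<in> e} = {p}" "{e \<in> B. z \<in> e} = {q}"
    using only_pq E z \<open>p \<in> A\<close> \<open>q \<in> B\<close> by blast+
  then have deg_z: "hdegree A z = 1" "hdegree B z = 1" by (simp_all add: hdegree_def)
  have deg_A: "hdegree A v = hdegree E v" if "v \<in> \<Union>A - {z}" for v
    using that UAB E by (intro hdegree_subset_eq) auto
  have cross': "b = q \<and> a = p" if "b \<in> B" "a \<in> A" "b \<inter> a \<noteq> {}" for b a
    using cross[OF that(2,1)] that(3) by (simp add: Int_commute)
  have "line_nbrs A a \<noteq> {}" if "a \<in> A" for a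
    using single_crossing_nonisolated[OF E(1) that _ \<open>line_nbrs E p \<noteq> {q}\<close> cross] N E(1) that
    by blast
  moreover have "line_nbrs B b \<noteq> {}" if "b \<in> B" for b
  proof (rule single_crossing_nonisolated[OF _ that _ \<open>line_nbrs E q \<noteq> {p}\<close> cross'])
    show "E = B \<union> A" using E(1) by blast
    show "line_nbrs E b \<noteq> {}" using N E(1) that by blast
  qed
  moreover have "card A < card E" "card B < card E"
    using \<open>finite E\<close> E \<open>p \<in> A\<close> \<open>q \<in> B\<close> by (auto intro!: psubset_card_mono)
  ultimately show thesis
    using that[OF E(1) \<open>p \<in> A\<close> \<open>q \<in> B\<close> _ _ _ _ UAB _ _ deg_z deg_A cross] z by blast
qed

section \<open>The induction on line forests\<close>

lemma focus_vertices_subset_Union: "g \<in> E \<Longrightarrow> focus_vertices E g \<subseteq> \<Union>E"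
  using anchor_in[of g E] by (auto simp: focus_vertices_def)

lemma focused_realizable_disconnected:
  fixes E :: "'a set set"
  assumes F: "forest_hg E" and N: "\<forall>e\<in>E. line_nbrs E e \<noteq> {}" and "g \<in> E"
    and "e0 \<in> E" "(g, e0) \<notin> (line_adj E)\<^sup>*"
    and IH: "\<And>E' g'. card E' < card E \<Longrightarrow> forest_hg (E' :: 'a set set) \<Longrightarrow> \<forall>e\<in>E'. line_nbrs E' e \<noteq> {} \<Longrightarrow>
      g' \<in> E' \<Longrightarrow> focused_realizable E' g'"
  shows "focused_realizable E g"
proof -
  have "finite E" using F by (simp add: forest_hg_def)
  obtain A B where AB: "E = A \<union> B" "g \<in> A" "B \<noteq> {}" "card A < card E" "card B < card E"
    "\<forall>a\<in>A. line_nbrs A a \<noteq> {}" "\<forall>b\<in>B. line_nbrs B b \<noteq> {}" "\<Union>A \<inter> \<Union>B = {}"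
    "focus_vertices E g \<subseteq> focus_vertices A g"
    by (rule line_component_split[OF N \<open>finite E\<close> \<open>g \<in> E\<close> \<open>e0 \<in> E\<close> \<open>(g, e0) \<notin> _\<close>])
  have "forest_hg A" "forest_hg B" using forest_hg_subset[OF F] AB(1) by auto
  obtain b where "b \<in> B" using AB(3) by blast
  obtain A1 where A1: "niche_realization (\<Union>A) A A1" "\<forall>v\<in>focus_vertices A g. source_or_sink A1 v"
    using IH[OF AB(4) \<open>forest_hg A\<close> AB(6) AB(2)] unfolding focused_realizable_def by blast
  obtain A2 where A2: "niche_realization (\<Union>B) B A2"
    using IH[OF AB(5) \<open>forest_hg B\<close> AB(7) \<open>b \<in> B\<close>] unfolding focused_realizable_def by blast
  then have "A2 \<subseteq> \<Union>B \<times> \<Union>B" by (simp add: niche_realization_def)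
  have "niche_realization (\<Union>A \<union> \<Union>B) (A \<union> B) (A1 \<union> A2)"
    by (rule niche_realization_Un[OF A1(1) A2]) (use AB(8) in blast)
  moreover have "source_or_sink (A1 \<union> A2) v" if "v \<in> focus_vertices E g" for v
  proof -
    from that AB(9) have "v \<in> focus_vertices A g" ..
    with focus_vertices_subset_Union[OF AB(2)] AB(8) have "v \<notin> \<Union>B" by blast
    with \<open>v \<in> focus_vertices A g\<close> A1(2) show ?thesis
      by (simp add: source_or_sink_Un_outside[OF \<open>A2 \<subseteq> \<Union>B \<times> \<Union>B\<close>])
  qed
  ultimately show ?thesis
    unfolding focused_realizable_def AB(1) by auto
qed

lemma focused_realizable_bridge:
  fixes E :: "'a set set"
  assumes F: "forest_hg E" and N: "\<forall>e\<in>E. line_nbrs E e \<noteq> {}" and "g \<in> E"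
    and q: "q \<in> line_nbrs E (anchor E g)" "q \<noteq> g" "line_nbrs E q \<noteq> {anchor E g}"
    and IH: "\<And>E' g'. card E' < card E \<Longrightarrow> forest_hg (E' :: 'a set set) \<Longrightarrow> \<forall>e\<in>E'. line_nbrs E' e \<noteq> {} \<Longrightarrow>
      g' \<in> E' \<Longrightarrow> focused_realizable E' g'"
  shows "focused_realizable E g"
proof -
  define p where "p = anchor E g"
  have "p \<in> E" using anchor_in[OF \<open>g \<in> E\<close>] by (simp add: p_def)
  have "line_nbrs E p \<noteq> {q}"
    using line_nbrs_anchor_ne[of E g q] N \<open>g \<in> E\<close> q(2) by (simp add: p_def)
  obtain A B z where S: "E = A \<union> B" "p \<in> A" "q \<in> B" "card A < card E" "card B < card E"
    "\<forall>a\<in>A. line_nbrs A a \<noteq> {}" "\<forall>b\<in>B. line_nbrs B b \<noteq> {}"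
    "\<Union>A \<inter> \<Union>B = {z}" "z \<in> p" "z \<in> q" "hdegree A z = 1" "hdegree B z = 1"
    "\<And>v. v \<in> \<Union>A - {z} \<Longrightarrow> hdegree A v = hdegree E v"
    "\<And>a b. a \<in> A \<Longrightarrow> b \<in> B \<Longrightarrow> a \<inter> b \<noteq> {} \<Longrightarrow> a = p \<and> b = q"
    by (rule line_bridge_split[OF F N \<open>p \<in> E\<close> q(1)[folded p_def] \<open>line_nbrs E p \<noteq> {q}\<close>
          q(3)[folded p_def]]) (rule that)
  have "g \<in> A"
  proof (cases E g rule: anchor_cases)
    case 1
    with S(2) show ?thesis by (simp add: p_def)
  next
    case 2
    then have "p \<inter> g \<noteq> {}" by (auto simp: line_nbrs_def p_def)
    then have "g \<notin> B" using S(14)[OF S(2)] q(2) by blast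
    with S(1) \<open>g \<in> E\<close> show ?thesis by blast
  qed
  have "A \<subseteq> E" "B \<subseteq> E" using S(1) by auto
  then have "forest_hg A" "forest_hg B" using forest_hg_subset[OF F] by auto
  obtain A1 where A1: "niche_realization (\<Union>A) A A1" "\<forall>v\<in>focus_vertices A g. source_or_sink A1 v"
    using IH[OF S(4) \<open>forest_hg A\<close> S(6) \<open>g \<in> A\<close>] unfolding focused_realizable_def by blast
  obtain A2 where A2: "niche_realization (\<Union>B) B A2" "\<forall>v\<in>focus_vertices B q. source_or_sink A2 v"
    using IH[OF S(5) \<open>forest_hg B\<close> S(7,3)] unfolding focused_realizable_def by blast
  have focus_A: "v \<in> focus_vertices A g" if "v \<in> g \<union> p" "hdegree A v = 1" for v
    using focus_vertices_subset[OF \<open>A \<subseteq> E\<close> \<open>g \<in> A\<close> _ _ that(2)] S(2) that(1) by (simp add: p_def)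
  have "z \<in> focus_vertices B q" using S(10,12) by (simp add: focus_vertices_def)
  with focus_A[of z] S(9,11) A1(2) A2(2)
  have "source_or_sink A1 z" "source_or_sink A2 z" by blast+
  then obtain A' where A': "niche_realization (\<Union>A \<union> \<Union>B) (A \<union> B) A'"
    "\<And>v. v \<in> \<Union>A - \<Union>B \<Longrightarrow> source_or_sink A' v \<longleftrightarrow> source_or_sink A1 v"
    by (rule niche_realization_glue[OF A1(1) A2(1) equalityD1[OF S(8)]]) (rule that)
  have "source_or_sink A' v" if v: "v \<in> focus_vertices E g" for v
  proof -
    have "q \<in> E" "q \<noteq> p" using q(1) by (auto simp: line_nbrs_def p_def)
    then have "hdegree E z = 2"
      using forest_hg_hdegree_two[OF F \<open>p \<in> E\<close>] S(9,10) by auto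
    with v have "v \<noteq> z" "v \<in> g \<union> p" "hdegree E v = 1"
      by (auto simp: focus_vertices_def p_def)
    with \<open>g \<in> A\<close> S(2,8) have "v \<in> \<Union>A - \<Union>B" by blast
    with S(13)[of v] \<open>v \<noteq> z\<close> \<open>hdegree E v = 1\<close> have "hdegree A v = 1" by simp
    with focus_A \<open>v \<in> g \<union> p\<close> A1(2) A'(2) \<open>v \<in> \<Union>A - \<Union>B\<close> show ?thesis by blast
  qed
  with A'(1) show ?thesis
    unfolding focused_realizable_def S(1) by auto
qed

lemma line_star_eq:
  assumes "p \<in> E" "g \<in> insert p (line_nbrs E p)" "\<forall>e\<in>E. (g, e) \<in> (line_adj E)\<^sup>*"
    and leaves: "\<And>l. l \<in> line_nbrs E p \<Longrightarrow> line_nbrs E l = {p}"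
  shows "E = insert p (line_nbrs E p)"
proof
  show "insert p (line_nbrs E p) \<subseteq> E" using \<open>p \<in> E\<close> by (auto simp: line_nbrs_def)
  show "E \<subseteq> insert p (line_nbrs E p)"
  proof
    fix e assume "e \<in> E"
    with assms(3) have "(g, e) \<in> (line_adj E)\<^sup>*" by blast
    then show "e \<in> insert p (line_nbrs E p)"
    proof (induction rule: rtrancl_induct)
      case (step e e')
      then have "e' \<in> line_nbrs E e" by (simp add: line_adj_iff)
      with step.IH leaves[of e] show ?case by auto
    qed (rule assms(2))
  qed
qed

lemma forest_star_realization:
  assumes F: "forest_hg E" and "p \<in> E" and E: "E = insert p (line_nbrs E p)"
    and leaves: "\<And>l. l \<in> line_nbrs E p \<Longrightarrow> line_nbrs E l = {p}" and "f0 \<in> line_nbrs E p"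
  obtains A where "niche_realization (\<Union>E) E A"
    and "\<And>v. v \<in> (p - \<Union>(line_nbrs E p)) \<union> (f0 - p) \<Longrightarrow> source_or_sink A v"
proof -
  let ?L = "line_nbrs E p"
  from F \<open>p \<in> E\<close> have "finite E" "finite p" "2 \<le> card p"
    unfolding forest_hg_def by auto
  then have "finite ?L" by (simp add: line_nbrs_def)
  have leaf: "finite l \<and> 3 \<le> card l \<and> (\<exists>x. p \<inter> l = {x})" if "l \<in> ?L" for l
  proof -
    from that have "l \<in> E" "p \<noteq> l" "p \<inter> l \<noteq> {}" by (auto simp: line_nbrs_def)
    with F \<open>p \<in> E\<close> show ?thesis
      using forest_hg_inter_singleton[OF F \<open>p \<in> E\<close> \<open>l \<in> E\<close>] unfolding forest_hg_def by metis
  qed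
  have disjoint: "l \<inter> l' = {}" if "l \<in> ?L" "l' \<in> ?L" "l \<noteq> l'" for l l'
  proof (rule ccontr)
    assume "l \<inter> l' \<noteq> {}"
    with that have "l' \<in> line_nbrs E l" by (auto simp: line_nbrs_def)
    with leaves[OF that(1)] that(2) show False by (auto simp: line_nbrs_def)
  qed
  obtain A where "niche_realization (p \<union> \<Union>?L) (insert p ?L) A"
    and "\<And>v. v \<in> (p - \<Union>?L) \<union> (f0 - p) \<Longrightarrow> source_or_sink A v"
    by (rule star_realization[OF \<open>finite ?L\<close> \<open>f0 \<in> ?L\<close> \<open>finite p\<close> \<open>2 \<le> card p\<close> leaf disjoint])
      (assumption | rule that)+
  moreover have "\<Union>E = p \<union> \<Union>?L" using E by (metis Union_insert)
  ultimately show thesis using that E by metis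
qed

lemma focused_realizable_star:
  assumes F: "forest_hg E" and N: "\<forall>e\<in>E. line_nbrs E e \<noteq> {}" and "g \<in> E"
    and conn: "\<forall>e\<in>E. (g, e) \<in> (line_adj E)\<^sup>*"
    and leaves: "\<forall>q\<in>line_nbrs E (anchor E g). q \<noteq> g \<longrightarrow> line_nbrs E q = {anchor E g}"
  shows "focused_realizable E g"
proof -
  define p where "p = anchor E g"
  have "p \<in> E" using anchor_in[OF \<open>g \<in> E\<close>] by (simp add: p_def)
  have g_cases: "p = g \<or> line_nbrs E g = {p}"
    by (cases E g rule: anchor_cases) (auto simp: p_def)
  have all_leaves: "line_nbrs E l = {p}" if "l \<in> line_nbrs E p" for l
  proof (cases "l = g")
    case True
    with that have "p \<noteq> g" by (auto simp: line_nbrs_def)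
    with True g_cases show ?thesis by simp
  qed (use leaves that in \<open>simp add: p_def\<close>)
  have "g \<in> insert p (line_nbrs E p)"
    using g_cases line_nbrs_sym[OF \<open>g \<in> E\<close>, of p] by auto
  then have E: "E = insert p (line_nbrs E p)"
    by (rule line_star_eq[OF \<open>p \<in> E\<close> _ conn all_leaves])
  obtain f0 where f0: "f0 \<in> line_nbrs E p" "p \<noteq> g \<Longrightarrow> f0 = g"
  proof (cases "p = g")
    case True
    with N \<open>g \<in> E\<close> obtain f0 where "f0 \<in> line_nbrs E p" by blast
    with True that show thesis by blast
  next
    case False
    with \<open>g \<in> insert p (line_nbrs E p)\<close> that show thesis by blast
  qed
  obtain A where A: "niche_realization (\<Union>E) E A"
    "\<And>v. v \<in> (p - \<Union>(line_nbrs E p)) \<union> (f0 - p) \<Longrightarrow> source_or_sink A v"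
    by (rule forest_star_realization[OF F \<open>p \<in> E\<close> E all_leaves f0(1)]) (assumption | rule that)+
  have "source_or_sink A v" if v: "v \<in> focus_vertices E g" for v
  proof (cases "v \<in> p")
    case True
    have "v \<notin> l" if "l \<in> line_nbrs E p" for l
    proof
      assume "v \<in> l"
      from that have "l \<in> E" "p \<noteq> l" by (auto simp: line_nbrs_def)
      with forest_hg_hdegree_two[OF F \<open>p \<in> E\<close>] \<open>v \<in> l\<close> True v show False
        by (auto simp: focus_vertices_def)
    qed
    with True A(2) show ?thesis by blast
  next
    case False
    with v have "v \<in> g" "p \<noteq> g" by (auto simp: focus_vertices_def p_def)
    with False f0(2) A(2) show ?thesis by blast
  qed
  with A(1) show ?thesis
    unfolding focused_realizable_def by blast
qed

text \<open>A hyperedge without neighbours in the line graph has no realization on its own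
  vertices, hence the second assumption.\<close>

theorem forest_hg_focused_realizable:
  fixes E :: "'a set set"
  assumes "forest_hg E" "\<forall>e\<in>E. line_nbrs E e \<noteq> {}" "g \<in> E"
  shows "focused_realizable E g"
  using assms
proof (induction "card E" arbitrary: E g rule: less_induct)
  case less
  let ?p = "anchor E g"
  consider (disconnected) e0 where "e0 \<in> E" "(g, e0) \<notin> (line_adj E)\<^sup>*"
    | (bridge) q where "q \<in> line_nbrs E ?p" "q \<noteq> g" "line_nbrs E q \<noteq> {?p}"
    | (star) "\<forall>e\<in>E. (g, e) \<in> (line_adj E)\<^sup>*" "\<forall>q\<in>line_nbrs E ?p. q \<noteq> g \<longrightarrow> line_nbrs E q = {?p}"
    by blast
  then show ?case
  proof cases
    case disconnected
    then show ?thesis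
      using focused_realizable_disconnected[OF less.prems] less.hyps by blast
  next
    case bridge
    then show ?thesis
      using focused_realizable_bridge[OF less.prems] less.hyps by blast
  next
    case star
    then show ?thesis
      using focused_realizable_star[OF less.prems] by blast
  qed
qed

section \<open>Line graphs of hypertrees\<close>

definition edge_rel :: "'a set set \<Rightarrow> ('a \<times> 'a) set" where
  "edge_rel G = {(x, y). {x, y} \<in> G}"

lemma sym_edge_rel: "sym (edge_rel G)"
  by (auto simp: sym_def edge_rel_def insert_commute)

lemma edge_rel_insert_doubleton:
  "edge_rel (insert {a, b} G) = insert (a, b) (insert (b, a) (edge_rel G))"
  by (auto simp: edge_rel_def doubleton_eq_iff)

lemma edge_rel_insert_other: "\<nexists>a b. e = {a, b} \<Longrightarrow> edge_rel (insert e G) = edge_rel G"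
  by (auto simp: edge_rel_def)

lemma rtrancl_insert_both:
  "(x, y) \<in> (insert (a, b) (insert (b, a) R))\<^sup>* \<Longrightarrow>
     (x, y) \<in> R\<^sup>* \<or> ((x, a) \<in> R\<^sup>* \<or> (x, b) \<in> R\<^sup>*) \<and> ((a, y) \<in> R\<^sup>* \<or> (b, y) \<in> R\<^sup>*)"
  by (auto simp: rtrancl_insert)

text \<open>Adding an edge joins at most two components.\<close>

lemma card_le_edges_plus_roots:
  assumes "finite G"
  shows "finite V \<Longrightarrow> finite S \<Longrightarrow> \<forall>x\<in>V. \<exists>s\<in>S. (x, s) \<in> (edge_rel G)\<^sup>* \<Longrightarrow>
    card V \<le> card G + card S"
  using assms
proof (induction G arbitrary: S rule: finite_induct)
  case empty
  then have "V \<subseteq> S" by (auto simp: edge_rel_def)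
  with empty.prems(2) show ?case by (simp add: card_mono)
next
  case (insert e G)
  show ?case
  proof (cases "\<exists>a b. e = {a, b}")
    case False
    with insert.prems have "card V \<le> card G + card S"
      by (intro insert.IH) (simp_all add: edge_rel_insert_other)
    with insert.hyps show ?thesis by simp
  next
    case True
    then obtain a b where e: "e = {a, b}" by blast
    let ?R = "edge_rel G"
    define S' where "S' = (if \<exists>s\<in>S. (a, s) \<in> ?R\<^sup>* then insert b S
      else if \<exists>s\<in>S. (b, s) \<in> ?R\<^sup>* then insert a S else S)"
    have "\<exists>s'\<in>S'. (x, s') \<in> ?R\<^sup>*" if "x \<in> V" for x
    proof -
      from that insert.prems(3) obtain s where "s \<in> S" "(x, s) \<in> (edge_rel (insert e G))\<^sup>*"
        by blast
      then have "(x, s) \<in> ?R\<^sup>* \<or> ((x, a) \<in> ?R\<^sup>* \<or> (x, b) \<in> ?R\<^sup>*) \<and> ((a, s) \<in> ?R\<^sup>* \<or> (b, s) \<in> ?R\<^sup>*)"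
        using rtrancl_insert_both by (simp add: e edge_rel_insert_doubleton)
      with \<open>s \<in> S\<close> show ?thesis
        unfolding S'_def by (auto intro: rtrancl_trans)
    qed
    moreover have "finite S'" "card S' \<le> card S + 1"
      using insert.prems(2) by (auto simp: S'_def card_insert_if)
    ultimately have "card V \<le> card G + card S'"
      using insert.IH insert.prems(1) by blast
    with \<open>card S' \<le> card S + 1\<close> insert.hyps show ?thesis by simp
  qed
qed

lemma connected_induced_edge_rel:
  assumes "graph_connected_on (induced T p) p" "x \<in> p" "y \<in> p"
  shows "(x, y) \<in> (edge_rel (induced T p))\<^sup>*"
proof -
  have "{(a, b). {a, b} \<in> induced T p \<and> a \<in> p \<and> b \<in> p} \<subseteq> edge_rel (induced T p)"
    by (auto simp: edge_rel_def)
  with assms show ?thesis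
    unfolding graph_connected_on_def by (meson rtrancl_mono subsetD)
qed

lemma is_tree_reaches_subtree:
  assumes "is_tree V T" "z \<in> p" "p \<subseteq> V" "x \<in> V"
  shows "\<exists>s\<in>p. (x, s) \<in> (edge_rel (T - induced T p))\<^sup>*"
proof -
  have "(z, x) \<in> {(a, b). {a, b} \<in> T \<and> a \<in> V \<and> b \<in> V}\<^sup>*"
    using assms unfolding is_tree_def graph_connected_on_def by blast
  then show ?thesis
  proof (induction rule: rtrancl_induct)
    case base
    with \<open>z \<in> p\<close> show ?case by blast
  next
    case (step y y')
    show ?case
    proof (cases "{y, y'} \<in> induced T p")
      case True
      then show ?thesis by (auto simp: induced_def)
    next
      case False
      with step.hyps(2) have "(y', y) \<in> edge_rel (T - induced T p)"
        by (auto simp: edge_rel_def insert_commute)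
      with step.IH show ?thesis by (blast intro: converse_rtrancl_into_rtrancl)
    qed
  qed
qed

text \<open>In a spanning tree, removing the edges of a subtree on \<open>p\<close> disconnects any two vertices
  of \<open>p\<close>; otherwise every vertex could be reached from \<open>p\<close> minus one vertex, and counting gives
  more edges than a tree has.\<close>

lemma is_tree_induced_separates:
  assumes T: "is_tree V T" and p: "p \<subseteq> V" "graph_connected_on (induced T p) p"
    and "z \<in> p" "v \<in> p" "v \<noteq> z"
  shows "(z, v) \<notin> (edge_rel (T - induced T p))\<^sup>*"
proof
  define F where "F = induced T p"
  let ?R = "edge_rel (T - F)"
  assume "(z, v) \<in> (edge_rel (T - induced T p))\<^sup>*"
  then have "(v, z) \<in> ?R\<^sup>*"
    using sym_rtrancl[OF sym_edge_rel] unfolding F_def by (meson symD)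
  from T have "finite V" "V \<noteq> {}" "card T = card V - 1"
    and T_sub: "\<forall>f\<in>T. f \<subseteq> V \<and> card f = 2"
    unfolding is_tree_def by auto
  have "finite T" using T_sub \<open>finite V\<close> by (metis Pow_iff finite_Pow_iff rev_finite_subset subsetI)
  have "F \<subseteq> T" "finite p" using p(1) \<open>finite V\<close> by (auto simp: F_def induced_def finite_subset)
  have "\<exists>s\<in>p. (x, s) \<in> ?R\<^sup>*" if "x \<in> V" for x
    using is_tree_reaches_subtree[OF T \<open>z \<in> p\<close> p(1) that] by (simp add: F_def)
  then have "\<exists>s\<in>p - {v}. (x, s) \<in> ?R\<^sup>*" if "x \<in> V" for x
    using that \<open>(v, z) \<in> ?R\<^sup>*\<close> \<open>z \<in> p\<close> \<open>v \<noteq> z\<close> by (metis Diff_iff rtrancl_trans singletonD)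
  then have "card V \<le> card (T - F) + card (p - {v})"
    using card_le_edges_plus_roots[of "T - F" V "p - {v}"] \<open>finite T\<close> \<open>finite V\<close> \<open>finite p\<close> by simp
  moreover have "card p \<le> card F + card {z}"
    using card_le_edges_plus_roots[of F p "{z}"] connected_induced_edge_rel[OF p(2) _ \<open>z \<in> p\<close>]
      \<open>F \<subseteq> T\<close> \<open>finite T\<close> \<open>finite p\<close> unfolding F_def by (simp add: finite_subset)
  moreover have "card (T - F) = card T - card F" "card F \<le> card T"
    using \<open>F \<subseteq> T\<close> \<open>finite T\<close> by (simp_all add: card_Diff_subset finite_subset card_mono)
  moreover have "card (p - {v}) = card p - 1" "1 \<le> card V"
    using \<open>v \<in> p\<close> \<open>finite p\<close> \<open>finite V\<close> \<open>V \<noteq> {}\<close> by (simp_all add: Suc_le_eq card_gt_0_iff)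
  ultimately show False
    using \<open>card T = card V - 1\<close> by simp
qed

lemma edge_rel_within_edge:
  assumes "linear_hg E" "g \<in> E" "p \<in> E" "g \<noteq> p" "finite g"
    and "graph_connected_on (induced T g) g" "u \<in> g" "w \<in> g"
  shows "(u, w) \<in> (edge_rel (T - induced T p))\<^sup>*"
proof -
  have "(u, w) \<in> {(a, b). {a, b} \<in> induced T g \<and> a \<in> g \<and> b \<in> g}\<^sup>*"
    using assms(6-8) unfolding graph_connected_on_def by blast
  moreover have "{(a, b). {a, b} \<in> induced T g \<and> a \<in> g \<and> b \<in> g} \<subseteq> (edge_rel (T - induced T p))\<^sup>="
  proof
    fix x assume "x \<in> {(a, b). {a, b} \<in> induced T g \<and> a \<in> g \<and> b \<in> g}"
    then obtain a b where ab: "x = (a, b)" "{a, b} \<in> induced T g" "a \<in> g" "b \<in> g" by blast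
    show "x \<in> (edge_rel (T - induced T p))\<^sup>="
    proof (cases "a = b")
      case False
      have "{a, b} \<notin> induced T p"
      proof
        assume "{a, b} \<in> induced T p"
        then have "a \<in> g \<inter> p" "b \<in> g \<inter> p" using ab(3,4) by (auto simp: induced_def)
        with linear_hg_inter[OF assms(1-5)] False show False by blast
      qed
      with ab(1,2) show ?thesis by (auto simp: edge_rel_def induced_def)
    qed (simp add: ab(1))
  qed
  ultimately have "(u, w) \<in> ((edge_rel (T - induced T p))\<^sup>=)\<^sup>*"
    using rtrancl_mono by blast
  then show ?thesis by simp
qed

text \<open>Following a second path in the line graph from \<open>q\<close> back to \<open>p\<close> would connect the common
  vertex of \<open>p\<close> and \<open>q\<close> to another vertex of \<open>p\<close> outside the subtree spanned by \<open>p\<close>.\<close>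

lemma hypertree_line_forest:
  assumes T: "is_tree V T"
    and E: "\<And>e. e \<in> E \<Longrightarrow> e \<subseteq> V \<and> 2 \<le> card e \<and> graph_connected_on (induced T e) e"
    and "linear_hg E" "finite E" "\<And>v. hdegree E v \<le> 2"
  shows "line_forest E"
  unfolding line_forest_def
proof clarify
  fix p q assume pq: "(p, q) \<in> line_adj E" and path: "(q, p) \<in> (line_adj E - {(p, q), (q, p)})\<^sup>*"
  let ?R = "edge_rel (T - induced T p)"
  have fin: "finite e" if "e \<in> E" for e
    using E[OF that] T by (meson finite_subset is_tree_def)
  from pq obtain z where "p \<in> E" "q \<in> E" "p \<noteq> q" "z \<in> p" "z \<in> q"
    by (auto simp: line_adj_def)
  have within: "(u, w) \<in> ?R\<^sup>*" if "g \<in> E" "g \<noteq> p" "u \<in> g" "w \<in> g" for g u w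
    using edge_rel_within_edge[OF \<open>linear_hg E\<close> that(1) \<open>p \<in> E\<close> that(2) fin] E that by blast
  have "(\<forall>w\<in>e. (z, w) \<in> ?R\<^sup>*) \<or> (\<exists>v\<in>p. v \<noteq> z \<and> (z, v) \<in> ?R\<^sup>*)"
    if "(q, e) \<in> (line_adj E - {(p, q), (q, p)})\<^sup>*" for e
    using that
  proof (induction rule: rtrancl_induct)
    case base
    show ?case using within[OF \<open>q \<in> E\<close> _ \<open>z \<in> q\<close>] \<open>p \<noteq> q\<close> by auto
  next
    case (step e e')
    then have e: "e \<in> E" "e' \<in> E" "e \<noteq> e'" "e \<inter> e' \<noteq> {}" "(e, e') \<noteq> (q, p)"
      by (auto simp: line_adj_def)
    show ?case
    proof (cases "\<forall>w\<in>e. (z, w) \<in> ?R\<^sup>*")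
      case True
      obtain w where w: "w \<in> e" "w \<in> e'" using e(4) by blast
      show ?thesis
      proof (cases "e' = p")
        case False
        with True w within[OF e(2) False w(2)] show ?thesis by (blast intro: rtrancl_trans)
      next
        case True
        with e have "e \<noteq> p" "e \<noteq> q" by auto
        with hdegree_le_two_third_edge[OF \<open>finite E\<close> assms(5) \<open>p \<in> E\<close> \<open>q \<in> E\<close> e(1) \<open>p \<noteq> q\<close>]
          \<open>z \<in> p\<close> \<open>z \<in> q\<close> have "z \<notin> e" by blast
        with \<open>\<forall>w\<in>e. (z, w) \<in> ?R\<^sup>*\<close> w True show ?thesis by metis
      qed
    qed (use step.IH in blast)
  qed
  from this[OF path] obtain v where "v \<in> p" "v \<noteq> z" "(z, v) \<in> ?R\<^sup>*"
    using obtain_other_element[of p z] E[OF \<open>p \<in> E\<close>] by blast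
  with is_tree_induced_separates[OF T _ _ \<open>z \<in> p\<close>] E[OF \<open>p \<in> E\<close>] show False by blast
qed

lemma niche_realization_add_disjoint_edges:
  assumes "niche_realization U E A" "U \<noteq> {}" "finite S"
    and "\<And>s. s \<in> S \<Longrightarrow> finite s \<and> 2 \<le> card s \<and> s \<inter> U = {}"
    and "\<And>s s'. s \<in> S \<Longrightarrow> s' \<in> S \<Longrightarrow> s \<noteq> s' \<Longrightarrow> s \<inter> s' = {}"
  shows "\<exists>A'. niche_realization (U \<union> \<Union>S) (E \<union> S) A'"
  using assms(3-5)
proof (induction S rule: finite_induct)
  case empty
  with assms(1) show ?case by auto
next
  case (insert s S)
  then obtain A' where A': "niche_realization (U \<union> \<Union>S) (E \<union> S) A'"
    by (metis insertCI)
  have s: "finite s" "2 \<le> card s" "s \<inter> U = {}"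
    using insert.prems(1)[of s] by auto
  moreover have "s \<inter> s' = {}" if "s' \<in> S" for s'
    using insert.prems(2)[of s s'] insert.hyps(2) that by auto
  ultimately have "s \<inter> (U \<union> \<Union>S) = {}" "finite s" "2 \<le> card s" by blast+
  then obtain A'' where "niche_realization (U \<union> \<Union>S \<union> s) (insert s (E \<union> S)) A''"
    using niche_realization_insert_disjoint[OF A'] assms(2) by blast
  then show ?case
    by (intro exI[of _ A'']) (simp add: Un_ac)
qed

lemma forest_hg_niche_realization:
  assumes F: "forest_hg E" and "\<exists>e\<in>E. line_nbrs E e \<noteq> {}"
  shows "\<exists>A. niche_realization (\<Union>E) E A"
proof -
  define E0 where "E0 = {e \<in> E. line_nbrs E e \<noteq> {}}"
  have "E0 \<subseteq> E" by (auto simp: E0_def)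
  have "\<forall>e\<in>E0. line_nbrs E0 e \<noteq> {}"
  proof
    fix e assume "e \<in> E0"
    then obtain f where f: "f \<in> line_nbrs E e" "e \<in> E" by (auto simp: E0_def)
    then have "e \<in> line_nbrs E f" "f \<in> E" by (auto simp: line_nbrs_def)
    then have "f \<in> E0" by (auto simp: E0_def)
    with f show "line_nbrs E0 e \<noteq> {}" using line_nbrs_subset[OF \<open>E0 \<subseteq> E\<close>] by auto
  qed
  moreover obtain g where "g \<in> E0" using assms(2) by (auto simp: E0_def)
  ultimately obtain A0 where A0: "niche_realization (\<Union>E0) E0 A0"
    using forest_hg_focused_realizable[OF forest_hg_subset[OF F \<open>E0 \<subseteq> E\<close>]]
    unfolding focused_realizable_def by blast
  from F have fin: "finite E" "\<And>e. e \<in> E \<Longrightarrow> finite e \<and> 3 \<le> card e"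
    unfolding forest_hg_def by auto
  then have "g \<noteq> {}" using \<open>g \<in> E0\<close> \<open>E0 \<subseteq> E\<close> by fastforce
  with \<open>g \<in> E0\<close> have "\<Union>E0 \<noteq> {}" by blast
  have isolated: "s \<inter> e = {}" if "s \<in> E - E0" "e \<in> E" "e \<noteq> s" for s e
    using that by (auto simp: E0_def line_nbrs_def)
  have "\<exists>A. niche_realization (\<Union>E0 \<union> \<Union>(E - E0)) (E0 \<union> (E - E0)) A"
  proof (rule niche_realization_add_disjoint_edges[OF A0 \<open>\<Union>E0 \<noteq> {}\<close>])
    show "finite (E - E0)" using fin(1) by simp
    show "finite s \<and> 2 \<le> card s \<and> s \<inter> \<Union>E0 = {}" if "s \<in> E - E0" for s
      using that fin(2)[of s] isolated[OF that] \<open>E0 \<subseteq> E\<close> by fastforce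
    show "s \<inter> s' = {}" if "s \<in> E - E0" "s' \<in> E - E0" "s \<noteq> s'" for s s'
      using isolated[OF that(1)] that(2,3) by blast
  qed
  moreover have "E0 \<union> (E - E0) = E" using \<open>E0 \<subseteq> E\<close> by blast
  ultimately show ?thesis by (metis Union_Un_distrib)
qed

lemma linear_hypertree_forest_hg:
  assumes H: "hypergraph V E" and "linear_hg E" "hypertree V E"
    and "max_degree V E = 2" "anti_rank E = 3"
  shows "forest_hg E"
proof -
  from H have "finite V" and EV: "\<And>e. e \<in> E \<Longrightarrow> e \<subseteq> V \<and> 2 \<le> card e"
    unfolding hypergraph_def by auto
  then have "finite E" by (meson Pow_iff finite_Pow_iff finite_subset subsetI)
  have "3 \<le> card e" if "e \<in> E" for e
    using Min_le[of "card ` E" "card e"] \<open>finite E\<close> that \<open>anti_rank E = 3\<close>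
    unfolding anti_rank_def by simp
  moreover have "finite e" if "e \<in> E" for e
    using EV[OF that] \<open>finite V\<close> by (rule finite_subset[OF conjunct1])
  moreover have "hdegree E v \<le> 2" for v
  proof (cases "v \<in> V")
    case True
    with \<open>finite V\<close> \<open>max_degree V E = 2\<close> show ?thesis
      unfolding max_degree_def by (metis Max_ge finite_imageI imageI)
  next
    case False
    with EV have "{e \<in> E. v \<in> e} = {}" by blast
    then have "hdegree E v = 0" by (simp only: hdegree_def card.empty)
    then show ?thesis by simp
  qed
  moreover obtain T where "is_tree V T" "\<And>e. e \<in> E \<Longrightarrow> graph_connected_on (induced T e) e"
    using \<open>hypertree V E\<close> unfolding hypertree_def by blast
  then have "line_forest E"
    using hypertree_line_forest[of V T E] EV \<open>linear_hg E\<close> \<open>finite E\<close> calculation(3) by blast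
  ultimately show ?thesis
    using \<open>finite E\<close> \<open>linear_hg E\<close> unfolding forest_hg_def by blast
qed

lemma max_degree_two_line_nbrs_ne:
  assumes "hypergraph V E" "E \<noteq> {}" "max_degree V E = 2"
  shows "\<exists>e\<in>E. line_nbrs E e \<noteq> {}"
proof -
  from assms(1,2) have "finite V" "V \<noteq> {}"
    unfolding hypergraph_def by (auto dest!: card_ge_0_finite)
  then obtain v where "v \<in> V" "hdegree E v = 2"
    using Max_in[of "hdegree E ` V"] assms(3) unfolding max_degree_def by fastforce
  then obtain e f where "{h \<in> E. v \<in> h} = {e, f}" "e \<noteq> f"
    unfolding hdegree_def by (meson card_2_iff)
  then have "f \<in> line_nbrs E e" "e \<in> E" by (auto simp: line_nbrs_def)
  then show ?thesis by blast
qed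

theorem theorem2:
  fixes V :: "'a set" and E :: "'a set set"
  assumes "hypergraph V E"
    and "E \<noteq> {}"
    and "linear_hg E"
    and "hypertree V E"
    and "max_degree V E = 2"
    and "anti_rank E = 3"
  shows "\<exists>A. acyclic_digraph V A \<and> niche_edges V A = E"
proof -
  have "forest_hg E"
    using assms(1,3-6) by (rule linear_hypertree_forest_hg)
  moreover have "\<exists>e\<in>E. line_nbrs E e \<noteq> {}"
    using assms(1,2,5) by (rule max_degree_two_line_nbrs_ne)
  ultimately obtain A where "niche_realization (\<Union>E) E A"
    using forest_hg_niche_realization by blast
  moreover have "\<Union>E \<subseteq> V"
    using assms(1) by (auto simp: hypergraph_def)
  ultimately show ?thesis
    using niche_realization_acyclic_digraph by blast
qed

end
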